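(* It holds that \[ \text{Regret}(T) = \sum_{k=1}^K \bigl(V^{\pi^*,k}_1(x^k_1) - V^{\pi^k,k}_1(x^k_1)\bigr) = \underbrace{\sum_{k=1}^K\sum_{h=1}^H \mathbb{E}_{\pi^*} \bigl[ \langle Q^{k}_h(x_h,\cdot), \pi^*_h(\cdot\,|\,x_h) - \pi^k_h(\cdot\,|\,x_h) \rangle \,\big|\, x_1=x^k_1\bigr]}_{\rm (i)} + \underbrace{\mathcal{M}_{K, H, 2}}_{\rm (ii)} +\underbrace{ \sum_{k=1}^K\sum_{h=1}^H\bigl( \mathbb{E}_{\pi^*}[\iota^{k}_h(x_h,a_h)\,|\,x_1=x^k_1] - \iota^{k}_h(x^k_h,a^k_h)\bigr)}_{\rm (iii)}, \] which is independent of the linear-MDP assumption. Here $\{\mathcal{M}_{k,h,m}\}_{(k,h,m)\in[K]\times[H]\times[2]}$ is a martingale adapted to the filtration $\{\mathcal{F}_{k,h,m}\}_{(k,h,m)\in[K]\times[H]\times[2]}$, both with respect to the timestep index $t(k,h,m)=(k-1)\cdot 2H+(h-1)\cdot 2+m$.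
   Context: Consider an episodic MDP with state space $\mathcal{S}$, finite action space $\mathcal{A}$, horizon $H$, transition kernels $\mathcal{P}_h(\cdot\,|\,x,a)$ (operator form $(\mathbb{P}_h f)(x,a)=\mathbb{E}[f(x')\,|\,x'\sim\mathcal{P}_h(\cdot\,|\,x,a)]$), fixed initial state $x^k_1=x_1$, and reward functions $r^k_h:\mathcal{S}\times\mathcal{A}\to[0,1]$ chosen (possibly adversarially, depending on past trajectories) at the start of episode $k$. In episode $k$ the agent plays policy $\pi^k=\{\pi^k_h\}_{h=1}^H$, generating $(x^k_h,a^k_h)_{h=1}^H$ with $a^k_h\sim\pi^k_h(\cdot\,|\,x^k_h)$, $x^k_{h+1}\sim\mathcal{P}_h(\cdot\,|\,x^k_h,a^k_h)$; $T=HK$. $V^{\pi,k}_h(x)=\mathbb{E}_\pi[\sum_{i=h}^H r^k_i(x_i,a_i)\,|\,x_h=x]$, $Q^{\pi,k}_h(x,a)$ analogously, and $\text{Regret}(T)=\max_{\pi}\sum_{k=1}^K(V^{\pi,k}_1(x^k_1)-V^{\pi^k,k}_1(x^k_1))$. The policies $\pi^k$ and estimated functions $Q^k_h:\mathcal{S}\times\mathcal{A}\to[0,H-h+1]$ are produced by the algorithm OPPO: $\pi^0_h$ uniform, $Q^0_h=0$; $\pi^k_h(\cdot\,|\,x)\propto\pi^{k-1}_h(\cdot\,|\,x)\exp(\alpha Q^{k-1}_h(x,\cdot))$; after episode $k$, with $V^k_{H+1}=0$, for $h=H,\dots,1$: $\Lambda^k_h=\sum_{\tau=1}^{k-1}\phi^\tau_h(x^\tau_h,a^\tau_h)\phi^\tau_h(x^\tau_h,a^\tau_h)^\top+\lambda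 I$, $w^k_h=(\Lambda^k_h)^{-1}\sum_{\tau=1}^{k-1}\phi^\tau_h(x^\tau_h,a^\tau_h)V^\tau_{h+1}(x^\tau_{h+1})$, $\phi^k_h(x,a)=\int_{\mathcal{S}}\psi(x,a,x')V^k_{h+1}(x')\,dx'$, $\Gamma^k_h=\beta(\phi^{k\top}_h(\Lambda^k_h)^{-1}\phi^k_h)^{1/2}$, $Q^k_h=\min\{r^k_h+\phi^{k\top}_h w^k_h+\Gamma^k_h,H-h+1\}^+$, $V^k_h(x)=\langle Q^k_h(x,\cdot),\pi^k_h(\cdot\,|\,x)\rangle$. Definitions: $\pi^*=\arg\max_{\pi}\sum_{k=1}^K V^{\pi,k}_1(x^k_1)$; model prediction error $\iota^k_h=r^k_h+\mathbb{P}_hV^k_{h+1}-Q^k_h$. Filtration: $\mathcal{F}_{k,h,1}$ is the $\sigma$-algebra generated by $\{(x^\tau_i,a^\tau_i)\}_{(\tau,i)\in[k-1]\times[H]}\cup\{r^\tau\}_{\tau\in[k]}\cup\{(x^k_i,a^k_i)\}_{i\in[h]}$, and $\mathcal{F}_{k,h,2}$ is generated by these together with $x^k_{h+1}$ ($x^k_{H+1}$ a null state). With $(\mathbb{J}_{k,h}f)(x)=\langle f(x,\cdot),\pi^k_h(\cdot\,|\,x)\rangle$, define $D_{k,h,1}=(\mathbb{J}_{k,h}(Q^k_h-Q^{\pi^k,k}_h))(x^k_h)-(Q^k_h-Q^{\pi^k,k}_h)(x^k_h,a^k_h)$, $D_{k,h,2}=(\mathbb{P}_h(V^k_{h+1}-V^{\pi^k,k}_{h+1}))(x^k_h,a^k_h)-(V^k_{h+1}-V^{\pi^k,k}_{h+1})(x^k_{h+1})$,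 and $\mathcal{M}_{k,h,m}=\sum_{(\tau,i,\ell):\,t(\tau,i,\ell)\le t(k,h,m)}D_{\tau,i,\ell}$. *)

theory Defs
  imports "HOL-Probability.Probability"
begin

definition Pop :: "(nat \<Rightarrow> 's \<Rightarrow> 'a \<Rightarrow> 's measure) \<Rightarrow> nat \<Rightarrow> ('s \<Rightarrow> real) \<Rightarrow> 's \<Rightarrow> 'a \<Rightarrow> real" where
  "Pop P h f x a = (\<integral>y. f y \<partial>(P h x a))"

definition Jop :: "(nat \<Rightarrow> 's \<Rightarrow> 'a::finite pmf) \<Rightarrow> nat \<Rightarrow> ('s \<Rightarrow> 'a \<Rightarrow> real) \<Rightarrow> 's \<Rightarrow> real" where
  "Jop pol h f x = (\<Sum>a\<in>UNIV. pmf (pol h x) a * f x a)"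

text \<open>Value of policy pol with reward r, n steps to go (current step H - n + 1).\<close>
primrec Vtg :: "(nat \<Rightarrow> 's \<Rightarrow> 'a::finite \<Rightarrow> 's measure) \<Rightarrow> nat \<Rightarrow> (nat \<Rightarrow> 's \<Rightarrow> 'a \<Rightarrow> real)
    \<Rightarrow> (nat \<Rightarrow> 's \<Rightarrow> 'a pmf) \<Rightarrow> nat \<Rightarrow> 's \<Rightarrow> real" where
  "Vtg P H r pol 0 x = 0"
| "Vtg P H r pol (Suc n) x =
     Jop pol (H - n) (\<lambda>y b. r (H - n) y b + Pop P (H - n) (Vtg P H r pol n) y b) x"

definition Vpi :: "(nat \<Rightarrow> 's \<Rightarrow> 'a::finite \<Rightarrow> 's measure) \<Rightarrow> nat \<Rightarrow> (nat \<Rightarrow> 's \<Rightarrow> 'a \<Rightarrow> real)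
    \<Rightarrow> (nat \<Rightarrow> 's \<Rightarrow> 'a pmf) \<Rightarrow> nat \<Rightarrow> 's \<Rightarrow> real" where
  "Vpi P H r pol h x = Vtg P H r pol (Suc H - h) x"

definition Qpi :: "(nat \<Rightarrow> 's \<Rightarrow> 'a::finite \<Rightarrow> 's measure) \<Rightarrow> nat \<Rightarrow> (nat \<Rightarrow> 's \<Rightarrow> 'a \<Rightarrow> real)
    \<Rightarrow> (nat \<Rightarrow> 's \<Rightarrow> 'a pmf) \<Rightarrow> nat \<Rightarrow> 's \<Rightarrow> 'a \<Rightarrow> real" where
  "Qpi P H r pol h x a = r h x a + Pop P h (Vpi P H r pol (Suc h)) x a"

text \<open>Etg P pol h f n x = E_pol[f(x_h,a_h) | x_{h-n} = x].\<close>
primrec Etg :: "(nat \<Rightarrow> 's \<Rightarrow> 'a::finite \<Rightarrow> 's measure) \<Rightarrow> (nat \<Rightarrow> 's \<Rightarrow> 'a pmf) \<Rightarrow> nat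
    \<Rightarrow> ('s \<Rightarrow> 'a \<Rightarrow> real) \<Rightarrow> nat \<Rightarrow> 's \<Rightarrow> real" where
  "Etg P pol h f 0 x = Jop pol h f x"
| "Etg P pol h f (Suc n) x = Jop pol (h - Suc n) (\<lambda>y b. Pop P (h - Suc n) (Etg P pol h f n) y b) x"

definition Epi :: "(nat \<Rightarrow> 's \<Rightarrow> 'a::finite \<Rightarrow> 's measure) \<Rightarrow> (nat \<Rightarrow> 's \<Rightarrow> 'a pmf) \<Rightarrow> nat
    \<Rightarrow> ('s \<Rightarrow> 'a \<Rightarrow> real) \<Rightarrow> 's \<Rightarrow> real" where
  "Epi P pol h f x = Etg P pol h f (h - 1) x"

definition policies :: "'s measure \<Rightarrow> (nat \<Rightarrow> 's \<Rightarrow> 'a::finite pmf) set" where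
  "policies S = {pol. \<forall>h a. (\<lambda>x. pmf (pol h x) a) \<in> borel_measurable S}"

definition Vest :: "nat \<Rightarrow> (nat \<Rightarrow> 's \<Rightarrow> 'a::finite pmf) \<Rightarrow> (nat \<Rightarrow> 's \<Rightarrow> 'a \<Rightarrow> real) \<Rightarrow> nat \<Rightarrow> 's \<Rightarrow> real" where
  "Vest H pol Q h x = (if h \<le> H then Jop pol h (Q h) x else 0)"

definition iota :: "(nat \<Rightarrow> 's \<Rightarrow> 'a::finite \<Rightarrow> 's measure) \<Rightarrow> nat \<Rightarrow> (nat \<Rightarrow> 's \<Rightarrow> 'a \<Rightarrow> real)
    \<Rightarrow> (nat \<Rightarrow> 's \<Rightarrow> 'a pmf) \<Rightarrow> (nat \<Rightarrow> 's \<Rightarrow> 'a \<Rightarrow> real) \<Rightarrow> nat \<Rightarrow> 's \<Rightarrow> 'a \<Rightarrow> real" where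
  "iota P H r pol Q h x a = r h x a + Pop P h (Vest H pol Q (Suc h)) x a - Q h x a"

text \<open>Random quantities, indexed by episode k and outcome w:
  R k w = r^k, Pol k w = pi^k, Q k w = Q^k, X k h w = x^k_h, A k h w = a^k_h.\<close>

definition D1 :: "(nat \<Rightarrow> 's \<Rightarrow> 'a::finite \<Rightarrow> 's measure) \<Rightarrow> nat
    \<Rightarrow> (nat \<Rightarrow> 'w \<Rightarrow> nat \<Rightarrow> 's \<Rightarrow> 'a \<Rightarrow> real) \<Rightarrow> (nat \<Rightarrow> 'w \<Rightarrow> nat \<Rightarrow> 's \<Rightarrow> 'a pmf)
    \<Rightarrow> (nat \<Rightarrow> 'w \<Rightarrow> nat \<Rightarrow> 's \<Rightarrow> 'a \<Rightarrow> real) \<Rightarrow> (nat \<Rightarrow> nat \<Rightarrow> 'w \<Rightarrow> 's) \<Rightarrow> (nat \<Rightarrow> nat \<Rightarrow> 'w \<Rightarrow> 'a)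
    \<Rightarrow> nat \<Rightarrow> nat \<Rightarrow> 'w \<Rightarrow> real" where
  "D1 P H R Pol Q X A k h w =
     (let f = (\<lambda>y b. Q k w h y b - Qpi P H (R k w) (Pol k w) h y b)
      in Jop (Pol k w) h f (X k h w) - f (X k h w) (A k h w))"

definition D2 :: "(nat \<Rightarrow> 's \<Rightarrow> 'a::finite \<Rightarrow> 's measure) \<Rightarrow> nat
    \<Rightarrow> (nat \<Rightarrow> 'w \<Rightarrow> nat \<Rightarrow> 's \<Rightarrow> 'a \<Rightarrow> real) \<Rightarrow> (nat \<Rightarrow> 'w \<Rightarrow> nat \<Rightarrow> 's \<Rightarrow> 'a pmf)
    \<Rightarrow> (nat \<Rightarrow> 'w \<Rightarrow> nat \<Rightarrow> 's \<Rightarrow> 'a \<Rightarrow> real) \<Rightarrow> (nat \<Rightarrow> nat \<Rightarrow> 'w \<Rightarrow> 's) \<Rightarrow> (nat \<Rightarrow> nat \<Rightarrow> 'w \<Rightarrow> 'a)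
    \<Rightarrow> nat \<Rightarrow> nat \<Rightarrow> 'w \<Rightarrow> real" where
  "D2 P H R Pol Q X A k h w =
     (let g = (\<lambda>y. Vest H (Pol k w) (Q k w) (Suc h) y - Vpi P H (R k w) (Pol k w) (Suc h) y)
      in Pop P h g (X k h w) (A k h w) - g (X k (Suc h) w))"

definition Dterm where
  "Dterm P H R Pol Q X A k h m w =
     (if m = (1::nat) then D1 P H R Pol Q X A k h w else D2 P H R Pol Q X A k h w)"

definition tidx :: "nat \<Rightarrow> nat \<Rightarrow> nat \<Rightarrow> nat \<Rightarrow> nat" where
  "tidx H k h m = (k - 1) * (2 * H) + (h - 1) * 2 + m"

definition Mart where
  "Mart P H K R Pol Q X A t w =
     (\<Sum>(k, h, m)\<in>{z \<in> {1..K} \<times> {1..H} \<times> {1..2::nat}. case z of (k, h, m) \<Rightarrow> tidx H k h m \<le> t}.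
        Dterm P H R Pol Q X A k h m w)"

text \<open>F_{k,h,m}: sigma-algebra generated by episodes 1..k-1, rewards r^1..r^k,
  (x^k_i,a^k_i) for i \<le> h, and x^k_{h+1} if m = 2 (x^k_{H+1} is a null state).\<close>
definition Fgen :: "'w measure \<Rightarrow> 's measure \<Rightarrow> nat \<Rightarrow> (nat \<Rightarrow> 'w \<Rightarrow> nat \<Rightarrow> 's \<Rightarrow> 'a \<Rightarrow> real)
    \<Rightarrow> (nat \<Rightarrow> nat \<Rightarrow> 'w \<Rightarrow> 's) \<Rightarrow> (nat \<Rightarrow> nat \<Rightarrow> 'w \<Rightarrow> 'a) \<Rightarrow> nat \<Rightarrow> nat \<Rightarrow> nat \<Rightarrow> 'w measure" where
  "Fgen M S H R X A k h m = sigma (space M)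
     ({X \<tau> i -` B \<inter> space M | \<tau> i B. \<tau> \<in> {1..<k} \<and> i \<in> {1..H} \<and> B \<in> sets S}
    \<union> {A \<tau> i -` B \<inter> space M | \<tau> i B. \<tau> \<in> {1..<k} \<and> i \<in> {1..H}}
    \<union> {(\<lambda>w. R \<tau> w i x a) -` B \<inter> space M | \<tau> i x a B.
          \<tau> \<in> {1..k} \<and> i \<in> {1..H} \<and> x \<in> space S \<and> B \<in> sets borel}
    \<union> {X k i -` B \<inter> space M | i B. i \<in> {1..h} \<and> B \<in> sets S}
    \<union> {A k i -` B \<inter> space M | i B. i \<in> {1..h}}
    \<union> {X k (Suc h) -` B \<inter> space M | B. m = 2 \<and> h < H \<and> B \<in> sets S})"

text \<open>Filtration indexed by the timestep t = t(k,h,m).\<close>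
definition Ft where
  "Ft M S H R X A t =
     Fgen M S H R X A ((t - 1) div (2 * H) + 1) (((t - 1) mod (2 * H)) div 2 + 1) ((t - 1) mod 2 + 1)"

definition is_martingale :: "'w measure \<Rightarrow> (nat \<Rightarrow> 'w measure) \<Rightarrow> (nat \<Rightarrow> 'w \<Rightarrow> real) \<Rightarrow> nat \<Rightarrow> bool" where
  "is_martingale M F Y T \<longleftrightarrow>
     (\<forall>t\<in>{1..T}. subalgebra M (F t) \<and> Y t \<in> borel_measurable (F t) \<and> integrable M (Y t)) \<and>
     (\<forall>t\<in>{1..<T}. sets (F t) \<subseteq> sets (F (Suc t))) \<and>
     (\<forall>t\<in>{1..<T}. AE w in M. real_cond_exp M (F t) (Y (Suc t)) w = Y t w)"

definition Regret where
  "Regret S P H K R Pol X w =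
     (SUP pol\<in>policies S. \<Sum>k=1..K. Vpi P H (R k w) pol 1 (X k 1 w))
     - (\<Sum>k=1..K. Vpi P H (R k w) (Pol k w) 1 (X k 1 w))"

end

theory Submission
  imports Defs
begin

(* Split V^{pi*}_1 - V^{pi^k}_1 at the estimate V^k_1.  Unrolling the Bellman equation of pi*
   against V^k produces, at every step h, the expected policy gap <Q^k_h, pi*_h - pi^k_h> and the
   expected model error iota^k_h under pi*.  The rest, V^k_1 - V^{pi^k}_1, telescopes along the
   observed trajectory: step h contributes D_{k,h,1} + D_{k,h,2} - iota^k_h(x^k_h, a^k_h).
   The D's are martingale differences because all estimates of episode k are F_{k,0,2}-measurable,
   a^k_h has conditional law pi^k_h given F_{k,h-1,2}, and x^k_{h+1} has conditional law P_h
   given F_{k,h,1}. *)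

section \<open>Kernels and conditional expectations\<close>

lemma integral_measurable_subprob_algebra2:
  fixes f :: "'x \<Rightarrow> 'y \<Rightarrow> real"
  assumes f: "(\<lambda>(x, y). f x y) \<in> borel_measurable (M \<Otimes>\<^sub>M N)"
    and L: "L \<in> M \<rightarrow>\<^sub>M subprob_algebra N"
  shows "(\<lambda>x. \<integral>y. f x y \<partial>L x) \<in> borel_measurable M"
proof -
  have "(\<lambda>x. distr (L x) (M \<Otimes>\<^sub>M N) (\<lambda>y. (x, y))) \<in> M \<rightarrow>\<^sub>M subprob_algebra (M \<Otimes>\<^sub>M N)"
    by (rule measurable_distr2[OF _ L]) simp
  from measurable_compose[OF this integral_measurable_subprob_algebra[OF f]]
  have "(\<lambda>x. integral\<^sup>L (distr (L x) (M \<Otimes>\<^sub>M N) (\<lambda>y. (x, y))) (\<lambda>(x, y). f x y)) \<in> borel_measurable M" .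
  then show ?thesis
  proof (rule measurable_cong[THEN iffD1, rotated])
    fix x assume x: "x \<in> space M"
    have "(\<lambda>y. (x, y)) \<in> L x \<rightarrow>\<^sub>M M \<Otimes>\<^sub>M N"
      unfolding subprob_measurableD(3)[OF L x] by (rule measurable_Pair1'[OF x])
    then show "integral\<^sup>L (distr (L x) (M \<Otimes>\<^sub>M N) (\<lambda>y. (x, y))) (\<lambda>(x, y). f x y) = (\<integral>y. f x y \<partial>L x)"
      by (simp only: integral_distr[OF _ f] case_prod_conv)
  qed
qed

lemma measurable_ident_coarser: "sets F \<subseteq> sets G \<Longrightarrow> space G = space F \<Longrightarrow> (\<lambda>w. w) \<in> G \<rightarrow>\<^sub>M F"
  by (intro measurableI) auto

lemma measurable_eval_pair:
  assumes f: "(\<lambda>(w, y). f w y) \<in> borel_measurable (F \<Otimes>\<^sub>M S)"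
    and G: "sets F \<subseteq> sets G" "space G = space F" and Y: "Y \<in> G \<rightarrow>\<^sub>M S"
  shows "(\<lambda>w. f w (Y w)) \<in> borel_measurable G"
proof -
  have "(\<lambda>w. (w, Y w)) \<in> G \<rightarrow>\<^sub>M F \<Otimes>\<^sub>M S"
    using measurable_ident_coarser[OF G] Y by (rule measurable_Pair)
  from measurable_compose[OF this f] show ?thesis by simp
qed

lemma measurable_eval_pair_action:
  assumes f: "\<And>b. (\<lambda>(w, y). f w y b) \<in> borel_measurable (F \<Otimes>\<^sub>M S)"
    and G: "sets F \<subseteq> sets G" "space G = space F" and Y: "Y \<in> G \<rightarrow>\<^sub>M S"
    and B: "B \<in> G \<rightarrow>\<^sub>M count_space (UNIV :: 'b::countable set)"
  shows "(\<lambda>w. f w (Y w) (B w)) \<in> borel_measurable G"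
  by (rule measurable_compose_countable[OF measurable_eval_pair[OF f G Y] B])

lemma (in prob_space) sigma_finite_subalgebra: "subalgebra M F \<Longrightarrow> sigma_finite_subalgebra M F"
  by (intro finite_measure_subalgebra_is_sigma_finite)
     (simp add: finite_measure_subalgebra_def finite_measure_subalgebra_axioms_def finite_measure_axioms)

lemma (in prob_space) real_cond_exp_eval_finite:
  fixes f :: "'a \<Rightarrow> 'b::finite \<Rightarrow> real"
  assumes F: "subalgebra M F"
    and f: "\<And>b. (\<lambda>w. f w b) \<in> borel_measurable F"
    and bounded: "\<And>w b. w \<in> space M \<Longrightarrow> \<bar>f w b\<bar> \<le> B"
    and Y: "Y \<in> M \<rightarrow>\<^sub>M count_space UNIV"
    and law: "\<And>b. AE w in M. real_cond_exp M F (\<lambda>w. indicator {b} (Y w)) w = p w b"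
  shows "AE w in M. real_cond_exp M F (\<lambda>w. f w (Y w)) w = (\<Sum>b\<in>UNIV. f w b * p w b)"
proof -
  interpret sigma_finite_subalgebra M F by (rule sigma_finite_subalgebra[OF F])
  have ind: "(\<lambda>w. indicator {b} (Y w) :: real) \<in> borel_measurable M" for b
    by (rule measurable_compose[OF Y]) simp
  have int: "integrable M (\<lambda>w. f w b * indicator {b} (Y w))" for b
    using measurable_from_subalg[OF F f] ind bounded
    by (intro integrable_const_bound[where B=B] AE_I2)
       (auto simp: indicator_def intro: order_trans[OF abs_ge_zero bounded])
  have eq: "(\<lambda>w. f w (Y w)) = (\<lambda>w. \<Sum>b\<in>UNIV. f w b * indicator {b} (Y w))"
    by (rule ext) (simp add: indicator_def if_distrib[of "(*) _"] sum.delta' cong: if_cong)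
  have "AE w in M. real_cond_exp M F (\<lambda>w. f w (Y w)) w
      = (\<Sum>b\<in>UNIV. real_cond_exp M F (\<lambda>w. f w b * indicator {b} (Y w)) w)"
    unfolding eq by (rule real_cond_exp_sum) (rule int)
  moreover have "AE w in M. \<forall>b\<in>UNIV. real_cond_exp M F (\<lambda>w. f w b * indicator {b} (Y w)) w
      = f w b * p w b"
  proof (rule AE_finite_allI[OF finite])
    fix b :: 'b
    show "AE w in M. real_cond_exp M F (\<lambda>w. f w b * indicator {b} (Y w)) w = f w b * p w b"
      using real_cond_exp_mult[OF f ind int, of b] law[of b] by eventually_elim simp
  qed
  ultimately show ?thesis by eventually_elim simp
qed

lemma (in prob_space) real_cond_exp_zero_mono:
  assumes F: "subalgebra M F" and G: "subalgebra M G" and FG: "sets F \<subseteq> sets G"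
    and f: "integrable M f" and zero: "AE w in M. real_cond_exp M G f w = 0"
  shows "AE w in M. real_cond_exp M F f w = 0"
proof -
  interpret F: sigma_finite_subalgebra M F by (rule sigma_finite_subalgebra[OF F])
  interpret G: sigma_finite_subalgebra M G by (rule sigma_finite_subalgebra[OF G])
  have "subalgebra G F" using F G FG by (simp add: subalgebra_def)
  then have "AE w in M. real_cond_exp M F (real_cond_exp M G f) w = real_cond_exp M F f w"
    by (rule F.real_cond_exp_nested_subalg[OF G _ f])
  moreover have "AE w in M. real_cond_exp M F (real_cond_exp M G f) w = real_cond_exp M F (\<lambda>_. 0) w"
    by (rule F.real_cond_exp_cong[OF zero]) auto
  moreover have "AE w in M. real_cond_exp M F (\<lambda>_. 0) w = 0"
    by (rule F.real_cond_exp_F_meas) auto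
  ultimately show ?thesis by eventually_elim simp
qed

definition bounded_borel :: "'s measure \<Rightarrow> ('s \<Rightarrow> real) \<Rightarrow> bool" where
  "bounded_borel S f \<longleftrightarrow> f \<in> borel_measurable S \<and> (\<exists>B. \<forall>x\<in>space S. \<bar>f x\<bar> \<le> B)"

definition bounded_borel2 :: "'s measure \<Rightarrow> ('s \<Rightarrow> 'a \<Rightarrow> real) \<Rightarrow> bool" where
  "bounded_borel2 S F \<longleftrightarrow>
     (\<forall>b. (\<lambda>y. F y b) \<in> borel_measurable S) \<and> (\<exists>B. \<forall>y\<in>space S. \<forall>b. \<bar>F y b\<bar> \<le> B)"

lemma bounded_borel_const: "bounded_borel S (\<lambda>y. c)"
  unfolding bounded_borel_def by auto

lemma bounded_borel2_add:
  "bounded_borel2 S F \<Longrightarrow> bounded_borel2 S G \<Longrightarrow> bounded_borel2 S (\<lambda>y b. F y b + G y b)"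
  unfolding bounded_borel2_def
  by (elim conjE exE, intro conjI exI[of _ "_ + _"] allI borel_measurable_add ballI, blast+)
     (rule order_trans[OF abs_triangle_ineq add_mono]; auto)

lemma bounded_borel2_diff:
  "bounded_borel2 S F \<Longrightarrow> bounded_borel2 S G \<Longrightarrow> bounded_borel2 S (\<lambda>y b. F y b - G y b)"
  unfolding bounded_borel2_def
  by (elim conjE exE, intro conjI exI[of _ "_ + _"] allI borel_measurable_diff ballI, blast+)
     (rule order_trans[OF abs_triangle_ineq4 add_mono]; auto)

lemma bounded_borel2_mult:
  "bounded_borel2 S F \<Longrightarrow> bounded_borel2 S G \<Longrightarrow> bounded_borel2 S (\<lambda>y b. F y b * G y b)"
  unfolding bounded_borel2_def
proof (elim conjE exE, intro conjI exI[of _ "_ * _"] allI borel_measurable_times ballI)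
  fix B1 B2 y b
  assume "\<forall>y\<in>space S. \<forall>b. \<bar>F y b\<bar> \<le> B1" "\<forall>y\<in>space S. \<forall>b. \<bar>G y b\<bar> \<le> B2" "y \<in> space S"
  then show "\<bar>F y b * G y b\<bar> \<le> B1 * B2"
    unfolding abs_mult by (intro mult_mono) (auto intro: order_trans[OF abs_ge_zero])
qed auto

lemma bounded_borel2_sum:
  assumes "\<And>i. i \<in> I \<Longrightarrow> bounded_borel2 S (F i)"
  shows "bounded_borel2 S (\<lambda>y b. \<Sum>i\<in>I. F i y b)"
proof -
  from assms obtain B where B: "\<And>i y b. i \<in> I \<Longrightarrow> y \<in> space S \<Longrightarrow> \<bar>F i y b\<bar> \<le> B i"
    unfolding bounded_borel2_def by metis
  have "\<bar>\<Sum>i\<in>I. F i y b\<bar> \<le> (\<Sum>i\<in>I. B i)" if "y \<in> space S" for y b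
    by (rule order_trans[OF sum_abs sum_mono]) (use B that in auto)
  moreover have "(\<lambda>y. \<Sum>i\<in>I. F i y b) \<in> borel_measurable S" for b
    using assms unfolding bounded_borel2_def by (intro borel_measurable_sum) auto
  ultimately show ?thesis unfolding bounded_borel2_def by blast
qed

lemma bounded_borel2_const: "bounded_borel S f \<Longrightarrow> bounded_borel2 S (\<lambda>y b. f y)"
  unfolding bounded_borel_def bounded_borel2_def by auto

lemma bounded_borel2_section: "bounded_borel2 S F \<Longrightarrow> bounded_borel S (\<lambda>y. F y b)"
  unfolding bounded_borel_def bounded_borel2_def by auto

lemma bounded_borel_pmf:
  "(\<lambda>y. pmf (p y) c) \<in> borel_measurable S \<Longrightarrow> bounded_borel S (\<lambda>y. pmf (p y) c)"
  unfolding bounded_borel_def by (auto intro!: exI[of _ 1] pmf_le_1)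

lemma policies_measurable: "pol \<in> policies S \<Longrightarrow> (\<lambda>x. pmf (pol h x) b) \<in> borel_measurable S"
  unfolding policies_def by auto

lemma Jop_abs_le:
  assumes "\<And>b. \<bar>f x b\<bar> \<le> B"
  shows "\<bar>Jop pol h f x\<bar> \<le> B"
proof -
  have "\<bar>Jop pol h f x\<bar> \<le> (\<Sum>b\<in>UNIV. pmf (pol h x) b * B)"
    unfolding Jop_def
    by (rule order_trans[OF sum_abs]) (intro sum_mono, auto simp: abs_mult intro!: mult_left_mono assms)
  also have "\<dots> = B" by (simp add: sum_distrib_right[symmetric] sum_pmf_eq_1)
  finally show ?thesis .
qed

lemma Jop_const: "Jop pol h (\<lambda>y b. c y) x = c x"
  unfolding Jop_def by (simp add: sum_distrib_right[symmetric] sum_pmf_eq_1)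

lemma Jop_add: "Jop pol h (\<lambda>y b. f y b + g y b) x = Jop pol h f x + Jop pol h g x"
  unfolding Jop_def by (simp add: distrib_left sum.distrib)

lemma Jop_diff: "Jop pol h (\<lambda>y b. f y b - g y b) x = Jop pol h f x - Jop pol h g x"
  unfolding Jop_def by (simp add: right_diff_distrib sum_subtractf)

lemma Jop_sum: "Jop pol h (\<lambda>y b. \<Sum>i\<in>I. f i y b) x = (\<Sum>i\<in>I. Jop pol h (f i) x)"
  unfolding Jop_def by (simp add: sum_distrib_left sum.swap[of _ I])

lemma Jop_cong: "(\<And>b. f x b = g x b) \<Longrightarrow> Jop pol h f x = Jop pol h g x"
  unfolding Jop_def by simp

lemma Jop_measurable_pair:
  assumes "\<And>b. (\<lambda>(w, y). pmf (pol w h y) b) \<in> borel_measurable (G \<Otimes>\<^sub>M S)"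
    and "\<And>b. (\<lambda>(w, y). F w y b) \<in> borel_measurable (G \<Otimes>\<^sub>M S)"
  shows "(\<lambda>(w, y). Jop (pol w) h (F w) y) \<in> borel_measurable (G \<Otimes>\<^sub>M S)"
  unfolding Jop_def using assms unfolding case_prod_beta'
  by (intro borel_measurable_sum borel_measurable_times) auto

lemma bounded_borel_Jop:
  assumes "\<And>b. (\<lambda>y. pmf (pol h y) b) \<in> borel_measurable S" and "bounded_borel2 S F"
  shows "bounded_borel S (Jop pol h F)"
proof -
  obtain B where "\<forall>y\<in>space S. \<forall>b. \<bar>F y b\<bar> \<le> B"
    using assms(2) unfolding bounded_borel2_def by auto
  then have "\<forall>x\<in>space S. \<bar>Jop pol h F x\<bar> \<le> B" by (auto intro!: Jop_abs_le)
  moreover have "Jop pol h F \<in> borel_measurable S"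
    unfolding Jop_def using assms unfolding bounded_borel2_def
    by (intro borel_measurable_sum borel_measurable_times) auto
  ultimately show ?thesis unfolding bounded_borel_def by auto
qed

section \<open>Value functions of a finite-horizon MDP\<close>

lemma Vest_beyond_horizon: "Vest H pol Q (Suc H) x = 0"
  by (simp add: Vest_def)

lemma Vpi_beyond_horizon: "Vpi P H r pol (Suc H) x = 0"
  by (simp add: Vpi_def)

locale finite_horizon_mdp =
  fixes S :: "'s measure" and P :: "nat \<Rightarrow> 's \<Rightarrow> 'a::finite \<Rightarrow> 's measure" and H :: nat
  assumes prob_space_P: "\<And>h x a. h \<in> {1..H} \<Longrightarrow> x \<in> space S \<Longrightarrow> prob_space (P h x a)"
    and P_measurable: "\<And>h a. h \<in> {1..H} \<Longrightarrow> (\<lambda>x. P h x a) \<in> S \<rightarrow>\<^sub>M subprob_algebra S"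
begin

lemma sets_P: "h \<in> {1..H} \<Longrightarrow> x \<in> space S \<Longrightarrow> sets (P h x a) = sets S"
  and space_P: "h \<in> {1..H} \<Longrightarrow> x \<in> space S \<Longrightarrow> space (P h x a) = space S"
  using subprob_measurableD[OF P_measurable] by auto

lemma integrable_P:
  assumes h: "h \<in> {1..H}" and x: "x \<in> space S" and f: "bounded_borel S f"
  shows "integrable (P h x a) f"
proof -
  interpret prob_space "P h x a" using prob_space_P[OF h x] .
  obtain B where B: "\<forall>y\<in>space S. \<bar>f y\<bar> \<le> B" using f unfolding bounded_borel_def by auto
  have "f \<in> borel_measurable (P h x a)"
    using f unfolding bounded_borel_def measurable_cong_sets[OF sets_P[OF h x] refl] by simp
  then show ?thesis
    by (intro integrable_const_bound[where B=B]) (auto simp: B space_P[OF h x])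
qed

lemma Pop_abs_le:
  assumes h: "h \<in> {1..H}" and x: "x \<in> space S" and f: "f \<in> borel_measurable S"
    and B: "\<And>y. y \<in> space S \<Longrightarrow> \<bar>f y\<bar> \<le> B"
  shows "\<bar>Pop P h f x a\<bar> \<le> B"
proof -
  interpret prob_space "P h x a" using prob_space_P[OF h x] .
  have "bounded_borel S f" unfolding bounded_borel_def using f B by auto
  have "\<bar>Pop P h f x a\<bar> \<le> (\<integral>y. \<bar>f y\<bar> \<partial>P h x a)"
    unfolding Pop_def by (rule integral_abs_bound)
  also have "\<dots> \<le> B"
    using integrable_P[OF h x \<open>bounded_borel S f\<close>] B
    by (intro integral_le_const) (auto simp: space_P[OF h x])
  finally show ?thesis .
qed

lemma Pop_measurable_pair:
  assumes h: "h \<in> {1..H}" and f: "(\<lambda>(w, y). f w y) \<in> borel_measurable (G \<Otimes>\<^sub>M S)"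
  shows "(\<lambda>(w, x). Pop P h (f w) x a) \<in> borel_measurable (G \<Otimes>\<^sub>M S)"
proof -
  have "(\<lambda>zy. (fst (fst zy), snd zy)) \<in> (G \<Otimes>\<^sub>M S) \<Otimes>\<^sub>M S \<rightarrow>\<^sub>M G \<Otimes>\<^sub>M S"
    by measurable
  from measurable_compose[OF this f]
  have "(\<lambda>(z, y). f (fst z) y) \<in> borel_measurable ((G \<Otimes>\<^sub>M S) \<Otimes>\<^sub>M S)"
    by (simp add: case_prod_beta')
  moreover have "(\<lambda>z. P h (snd z) a) \<in> G \<Otimes>\<^sub>M S \<rightarrow>\<^sub>M subprob_algebra S"
    by (rule measurable_compose[OF measurable_snd P_measurable[OF h]])
  ultimately have "(\<lambda>z. \<integral>y. f (fst z) y \<partial>P h (snd z) a) \<in> borel_measurable (G \<Otimes>\<^sub>M S)"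
    by (rule integral_measurable_subprob_algebra2)
  then show ?thesis unfolding Pop_def by (simp add: case_prod_beta')
qed

lemma Pop_measurable:
  "h \<in> {1..H} \<Longrightarrow> f \<in> borel_measurable S \<Longrightarrow> (\<lambda>x. Pop P h f x a) \<in> borel_measurable S"
  unfolding Pop_def
  by (rule measurable_compose[OF P_measurable integral_measurable_subprob_algebra])

lemma bounded_borel2_Pop:
  "h \<in> {1..H} \<Longrightarrow> bounded_borel S f \<Longrightarrow> bounded_borel2 S (\<lambda>y b. Pop P h f y b)"
  unfolding bounded_borel2_def bounded_borel_def using Pop_measurable Pop_abs_le by metis

lemma Pop_cong:
  "h \<in> {1..H} \<Longrightarrow> x \<in> space S \<Longrightarrow> (\<And>y. y \<in> space S \<Longrightarrow> f y = g y) \<Longrightarrow>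
   Pop P h f x a = Pop P h g x a"
  unfolding Pop_def by (rule Bochner_Integration.integral_cong) (auto simp: space_P)

lemma Pop_add:
  "h \<in> {1..H} \<Longrightarrow> x \<in> space S \<Longrightarrow> bounded_borel S f \<Longrightarrow> bounded_borel S g \<Longrightarrow>
   Pop P h (\<lambda>y. f y + g y) x a = Pop P h f x a + Pop P h g x a"
  unfolding Pop_def by (simp add: integrable_P)

lemma Pop_diff:
  "h \<in> {1..H} \<Longrightarrow> x \<in> space S \<Longrightarrow> bounded_borel S f \<Longrightarrow> bounded_borel S g \<Longrightarrow>
   Pop P h (\<lambda>y. f y - g y) x a = Pop P h f x a - Pop P h g x a"
  unfolding Pop_def by (simp add: integrable_P)

lemma Pop_sum:
  "h \<in> {1..H} \<Longrightarrow> x \<in> space S \<Longrightarrow> (\<And>i. i \<in> I \<Longrightarrow> bounded_borel S (f i)) \<Longrightarrow>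
   Pop P h (\<lambda>y. \<Sum>i\<in>I. f i y) x a = (\<Sum>i\<in>I. Pop P h (f i) x a)"
  unfolding Pop_def by (simp add: integrable_P Bochner_Integration.integral_sum)

lemma Vpi_Bellman:
  assumes "j \<in> {1..H}"
  shows "Vpi P H r pol j x = Jop pol j (\<lambda>y b. r j y b + Pop P j (Vpi P H r pol (Suc j)) y b) x"
proof -
  have "Suc H - j = Suc (H - j)" "H - (H - j) = j" "Suc H - Suc j = H - j" using assms by auto
  then show ?thesis unfolding Vpi_def by simp
qed

lemma Vpi_eq_Jop_Qpi: "j \<in> {1..H} \<Longrightarrow> Vpi P H r pol j x = Jop pol j (Qpi P H r pol j) x"
  unfolding Vpi_Bellman Qpi_def ..

lemma Vtg_measurable_pair:
  assumes r: "\<And>h a. h \<in> {1..H} \<Longrightarrow> (\<lambda>(w, x). r w h x a) \<in> borel_measurable (G \<Otimes>\<^sub>M S)"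
    and pol: "\<And>h a. h \<in> {1..H} \<Longrightarrow> (\<lambda>(w, x). pmf (pol w h x) a) \<in> borel_measurable (G \<Otimes>\<^sub>M S)"
  shows "n \<le> H \<Longrightarrow> (\<lambda>(w, x). Vtg P H (r w) (pol w) n x) \<in> borel_measurable (G \<Otimes>\<^sub>M S)"
proof (induction n)
  case (Suc n)
  then have h: "H - n \<in> {1..H}" by auto
  have "(\<lambda>(w, x). r w (H - n) x b + Pop P (H - n) (Vtg P H (r w) (pol w) n) x b)
          \<in> borel_measurable (G \<Otimes>\<^sub>M S)" for b
    using r[OF h] Pop_measurable_pair[OF h Suc.IH] Suc.prems unfolding case_prod_beta'
    by (intro borel_measurable_add) auto
  with pol[OF h] show ?case
    unfolding Vtg.simps by (intro Jop_measurable_pair[where pol=pol])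
qed (simp add: case_prod_beta')

lemma bounded_borel_Vtg:
  assumes r: "\<And>h. h \<in> {1..H} \<Longrightarrow> bounded_borel2 S (r h)"
    and pol: "\<And>h a. h \<in> {1..H} \<Longrightarrow> (\<lambda>x. pmf (pol h x) a) \<in> borel_measurable S"
  shows "n \<le> H \<Longrightarrow> bounded_borel S (Vtg P H r pol n)"
proof (induction n)
  case 0
  show ?case by (simp add: bounded_borel_const)
next
  case (Suc n)
  then have h: "H - n \<in> {1..H}" by auto
  have "Vtg P H r pol (Suc n) = Jop pol (H - n) (\<lambda>y b. r (H - n) y b + Pop P (H - n) (Vtg P H r pol n) y b)"
    by (rule ext) simp
  moreover have "bounded_borel S (Vtg P H r pol n)" using Suc by simp
  ultimately show ?case
    by (simp only:) (intro bounded_borel_Jop bounded_borel2_add r bounded_borel2_Pop pol h)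
qed

lemma Vtg_abs_le:
  assumes r: "\<And>h. h \<in> {1..H} \<Longrightarrow> bounded_borel2 S (r h)"
    and rB: "\<And>h x a. h \<in> {1..H} \<Longrightarrow> x \<in> space S \<Longrightarrow> \<bar>r h x a\<bar> \<le> B"
    and pol: "\<And>h a. h \<in> {1..H} \<Longrightarrow> (\<lambda>x. pmf (pol h x) a) \<in> borel_measurable S"
  shows "n \<le> H \<Longrightarrow> x \<in> space S \<Longrightarrow> \<bar>Vtg P H r pol n x\<bar> \<le> n * B"
proof (induction n arbitrary: x)
  case (Suc n)
  then have h: "H - n \<in> {1..H}" by auto
  have "Vtg P H r pol n \<in> borel_measurable S"
    using bounded_borel_Vtg[OF r pol] Suc.prems unfolding bounded_borel_def by simp
  then have "\<bar>Pop P (H - n) (Vtg P H r pol n) x b\<bar> \<le> n * B" for b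
    using Suc by (intro Pop_abs_le[OF h]) auto
  then have "\<bar>r (H - n) x b + Pop P (H - n) (Vtg P H r pol n) x b\<bar> \<le> B + n * B" for b
    using rB[OF h Suc.prems(2), of b] by (intro order_trans[OF abs_triangle_ineq add_mono])
  then show ?case unfolding Vtg.simps by (intro Jop_abs_le) (simp add: algebra_simps)
qed simp

lemma bounded_borel_Vpi:
  "(\<And>h. h \<in> {1..H} \<Longrightarrow> bounded_borel2 S (r h)) \<Longrightarrow>
   (\<And>h a. h \<in> {1..H} \<Longrightarrow> (\<lambda>x. pmf (pol h x) a) \<in> borel_measurable S) \<Longrightarrow>
   1 \<le> j \<Longrightarrow> bounded_borel S (Vpi P H r pol j)"
  unfolding Vpi_def[abs_def] by (rule bounded_borel_Vtg) auto

end

section \<open>Unrolling the Bellman equation against an estimate\<close>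

(* The integrand of term (i), as a state-action function that ignores the action. *)
definition policy_gap :: "(nat \<Rightarrow> 's \<Rightarrow> 'a::finite pmf) \<Rightarrow> (nat \<Rightarrow> 's \<Rightarrow> 'a pmf)
    \<Rightarrow> (nat \<Rightarrow> 's \<Rightarrow> 'a \<Rightarrow> real) \<Rightarrow> nat \<Rightarrow> 's \<Rightarrow> 'a \<Rightarrow> real" where
  "policy_gap ps pk Qk h y b = (\<Sum>c\<in>UNIV. (pmf (ps h y) c - pmf (pk h y) c) * Qk h y c)"

lemma Jop_policy_gap: "Jop ps h (policy_gap ps pk Qk h) x = Jop ps h (Qk h) x - Jop pk h (Qk h) x"
  unfolding policy_gap_def[abs_def] Jop_const by (simp add: Jop_def left_diff_distrib sum_subtractf)

context finite_horizon_mdp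
begin

lemma bounded_borel_Etg:
  assumes ps: "ps \<in> policies S" and F: "bounded_borel2 S F"
  shows "n < h \<Longrightarrow> h \<le> H \<Longrightarrow> bounded_borel S (Etg P ps h F n)"
proof (induction n)
  case 0
  have "Etg P ps h F 0 = Jop ps h F" by (rule ext) simp
  with policies_measurable[OF ps] F show ?case by (simp add: bounded_borel_Jop)
next
  case (Suc n)
  then have h: "h - Suc n \<in> {1..H}" by auto
  have "Etg P ps h F (Suc n) = Jop ps (h - Suc n) (\<lambda>y b. Pop P (h - Suc n) (Etg P ps h F n) y b)"
    by (rule ext) simp
  with Suc show ?case
    by (simp only:) (intro bounded_borel_Jop policies_measurable[OF ps] bounded_borel2_Pop h, simp)
qed

lemma Etg_add:
  assumes ps: "ps \<in> policies S" and F: "bounded_borel2 S F" and G: "bounded_borel2 S G"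
  shows "n < h \<Longrightarrow> h \<le> H \<Longrightarrow> x \<in> space S \<Longrightarrow>
    Etg P ps h (\<lambda>y b. F y b + G y b) n x = Etg P ps h F n x + Etg P ps h G n x"
proof (induction n arbitrary: x)
  case 0
  then show ?case by (simp add: Jop_add)
next
  case (Suc n)
  then have h: "h - Suc n \<in> {1..H}" by auto
  have "Pop P (h - Suc n) (Etg P ps h (\<lambda>y b. F y b + G y b) n) x b
      = Pop P (h - Suc n) (\<lambda>y. Etg P ps h F n y + Etg P ps h G n y) x b" for b
    by (rule Pop_cong[OF h Suc.prems(3)]) (use Suc in auto)
  also have "\<dots> b = Pop P (h - Suc n) (Etg P ps h F n) x b + Pop P (h - Suc n) (Etg P ps h G n) x b" for b
    by (rule Pop_add[OF h Suc.prems(3)]) (use bounded_borel_Etg[OF ps F] bounded_borel_Etg[OF ps G] Suc in auto)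
  finally show ?case by (simp add: Jop_def distrib_left sum.distrib)
qed

lemma bounded_borel_Vest:
  assumes pk: "\<And>h b. h \<in> {1..H} \<Longrightarrow> (\<lambda>x. pmf (pk h x) b) \<in> borel_measurable S"
    and Qk: "\<And>h. h \<in> {1..H} \<Longrightarrow> bounded_borel2 S (Qk h)" and j: "1 \<le> j"
  shows "bounded_borel S (Vest H pk Qk j)"
proof (cases "j \<le> H")
  case True
  then have "Vest H pk Qk j = Jop pk j (Qk j)" by (intro ext) (simp add: Vest_def)
  with True j pk Qk show ?thesis by (simp add: bounded_borel_Jop)
next
  case False
  then have "Vest H pk Qk j = (\<lambda>_. 0)" by (intro ext) (simp add: Vest_def)
  then show ?thesis by (simp add: bounded_borel_const)
qed

lemma bounded_borel2_iota:
  assumes "\<And>h b. h \<in> {1..H} \<Longrightarrow> (\<lambda>x. pmf (pk h x) b) \<in> borel_measurable S"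
    and "\<And>h. h \<in> {1..H} \<Longrightarrow> bounded_borel2 S (r h)"
    and "\<And>h. h \<in> {1..H} \<Longrightarrow> bounded_borel2 S (Qk h)" and "h \<in> {1..H}"
  shows "bounded_borel2 S (iota P H r pk Qk h)"
  unfolding iota_def[abs_def] using assms
  by (intro bounded_borel2_diff bounded_borel2_add bounded_borel2_Pop bounded_borel_Vest) auto

lemma bounded_borel2_policy_gap:
  assumes ps: "ps \<in> policies S" and pk: "\<And>b. (\<lambda>x. pmf (pk h x) b) \<in> borel_measurable S"
    and Qk: "bounded_borel2 S (Qk h)"
  shows "bounded_borel2 S (policy_gap ps pk Qk h)"
  unfolding policy_gap_def[abs_def]
  by (intro bounded_borel2_sum bounded_borel2_mult bounded_borel2_diff bounded_borel2_const
      bounded_borel_pmf policies_measurable[OF ps] pk bounded_borel2_section[OF Qk])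

context
  fixes r :: "nat \<Rightarrow> 's \<Rightarrow> 'a \<Rightarrow> real" and pk :: "nat \<Rightarrow> 's \<Rightarrow> 'a pmf"
    and Qk :: "nat \<Rightarrow> 's \<Rightarrow> 'a \<Rightarrow> real"
  assumes r: "\<And>h. h \<in> {1..H} \<Longrightarrow> bounded_borel2 S (r h)"
    and pk: "\<And>h b. h \<in> {1..H} \<Longrightarrow> (\<lambda>x. pmf (pk h x) b) \<in> borel_measurable S"
    and Qk: "\<And>h. h \<in> {1..H} \<Longrightarrow> bounded_borel2 S (Qk h)"
begin

lemma Vpi_minus_Vest_Bellman:
  assumes ps: "ps \<in> policies S" and n: "n \<in> {1..H}" and x: "x \<in> space S"
  shows "Vpi P H r ps n x - Vest H pk Qk n x =
    Jop ps n (\<lambda>y b. policy_gap ps pk Qk n y b + iota P H r pk Qk n y b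
      + Pop P n (\<lambda>z. Vpi P H r ps (Suc n) z - Vest H pk Qk (Suc n) z) y b) x"
proof -
  have "Pop P n (\<lambda>z. Vpi P H r ps (Suc n) z - Vest H pk Qk (Suc n) z) x b
      = Pop P n (Vpi P H r ps (Suc n)) x b - Pop P n (Vest H pk Qk (Suc n)) x b" for b
    using ps by (intro Pop_diff n x bounded_borel_Vpi r bounded_borel_Vest pk Qk policies_measurable) auto
  then have "Jop ps n (\<lambda>y b. policy_gap ps pk Qk n y b + iota P H r pk Qk n y b
      + Pop P n (\<lambda>z. Vpi P H r ps (Suc n) z - Vest H pk Qk (Suc n) z) y b) x
    = Jop ps n (\<lambda>y b. policy_gap ps pk Qk n y b + (r n y b + Pop P n (Vpi P H r ps (Suc n)) y b)
      - Qk n y b) x"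
    by (intro Jop_cong) (simp add: iota_def)
  also have "\<dots> = Jop ps n (policy_gap ps pk Qk n) x + Vpi P H r ps n x - Jop ps n (Qk n) x"
    unfolding Jop_diff Jop_add Vpi_Bellman[OF n] ..
  also have "\<dots> = Vpi P H r ps n x - Vest H pk Qk n x"
    using n by (simp add: Jop_policy_gap Vest_def)
  finally show ?thesis by simp
qed

lemma Vpi_minus_Vest_unroll:
  assumes ps: "ps \<in> policies S" and j: "1 \<le> j" "j \<le> Suc H" and x: "x \<in> space S"
  shows "Vpi P H r ps j x - Vest H pk Qk j x =
    (\<Sum>h=j..H. Etg P ps h (\<lambda>y b. policy_gap ps pk Qk h y b + iota P H r pk Qk h y b) (h - j) x)"
  using j(2,1) x
proof (induction j arbitrary: x rule: inc_induct)
  case base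
  show ?case by (simp add: Vpi_beyond_horizon Vest_beyond_horizon)
next
  case (step n)
  then have n: "n \<in> {1..H}" by auto
  define G where "G h = (\<lambda>y b. policy_gap ps pk Qk h y b + iota P H r pk Qk h y b)" for h
  have G: "bounded_borel2 S (G h)" if "h \<in> {1..H}" for h
    unfolding G_def using that ps
    by (intro bounded_borel2_add bounded_borel2_policy_gap bounded_borel2_iota pk r Qk)
  have E: "bounded_borel S (Etg P ps h (G h) (h - Suc n))" if "h \<in> {Suc n..H}" for h
    using that by (intro bounded_borel_Etg[OF ps G]) auto
  have unfold: "Etg P ps h (G h) (h - n) x
      = Jop ps n (\<lambda>y b. Pop P n (Etg P ps h (G h) (h - Suc n)) y b) x" if "h \<in> {Suc n..H}" for h
  proof -
    from that have "h - n = Suc (h - Suc n)" "h - Suc (h - Suc n) = n" by auto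
    then show ?thesis by simp
  qed
  have "(\<Sum>h=n..H. Etg P ps h (G h) (h - n) x)
      = Jop ps n (G n) x + (\<Sum>h=Suc n..H. Etg P ps h (G h) (h - n) x)"
    using n by (simp add: sum.atLeast_Suc_atMost)
  also have "\<dots> = Jop ps n (G n) x
      + (\<Sum>h=Suc n..H. Jop ps n (\<lambda>y b. Pop P n (Etg P ps h (G h) (h - Suc n)) y b) x)"
    using unfold by simp
  also have "\<dots> = Jop ps n (\<lambda>y b. G n y b
      + Pop P n (\<lambda>z. \<Sum>h=Suc n..H. Etg P ps h (G h) (h - Suc n) z) y b) x"
    unfolding Jop_sum[symmetric] Jop_add
    by (intro arg_cong2[where f="(+)"] refl Jop_cong Pop_sum[OF n step.prems(2), symmetric] E)
  also have "\<dots> = Jop ps n (\<lambda>y b. G n y b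
      + Pop P n (\<lambda>z. Vpi P H r ps (Suc n) z - Vest H pk Qk (Suc n) z) y b) x"
    using step.IH by (intro Jop_cong arg_cong2[where f="(+)"] refl Pop_cong[OF n step.prems(2)])
      (simp add: G_def)
  also have "\<dots> = Vpi P H r ps n x - Vest H pk Qk n x"
    unfolding G_def by (rule Vpi_minus_Vest_Bellman[OF ps n step.prems(2), symmetric])
  finally show ?case unfolding G_def by simp
qed

lemma Vpi_minus_Vest_expansion:
  assumes ps: "ps \<in> policies S" and x: "x \<in> space S"
  shows "Vpi P H r ps 1 x - Vest H pk Qk 1 x =
    (\<Sum>h=1..H. Epi P ps h (policy_gap ps pk Qk h) x) + (\<Sum>h=1..H. Epi P ps h (iota P H r pk Qk h) x)"
proof -
  have "Vpi P H r ps 1 x - Vest H pk Qk 1 x =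
      (\<Sum>h=1..H. Etg P ps h (\<lambda>y b. policy_gap ps pk Qk h y b + iota P H r pk Qk h y b) (h - 1) x)"
    by (rule Vpi_minus_Vest_unroll[OF ps _ _ x]) auto
  also have "\<dots> = (\<Sum>h=1..H. Etg P ps h (policy_gap ps pk Qk h) (h - 1) x
      + Etg P ps h (iota P H r pk Qk h) (h - 1) x)"
    using ps x
    by (intro sum.cong refl Etg_add bounded_borel2_policy_gap bounded_borel2_iota pk r Qk) auto
  finally show ?thesis by (simp add: Epi_def sum.distrib)
qed

lemma Vest_minus_Vpi_step:
  assumes j: "j \<in> {1..H}" and x: "x \<in> space S"
  shows "(Jop pk j (\<lambda>y b. Qk j y b - Qpi P H r pk j y b) x - (Qk j x a - Qpi P H r pk j x a))
       + (Pop P j (\<lambda>y. Vest H pk Qk (Suc j) y - Vpi P H r pk (Suc j) y) x a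
          - (Vest H pk Qk (Suc j) x' - Vpi P H r pk (Suc j) x'))
       - iota P H r pk Qk j x a
     = (Vest H pk Qk j x - Vpi P H r pk j x) - (Vest H pk Qk (Suc j) x' - Vpi P H r pk (Suc j) x')"
proof -
  have "Jop pk j (\<lambda>y b. Qk j y b - Qpi P H r pk j y b) x = Vest H pk Qk j x - Vpi P H r pk j x"
    using j by (simp add: Jop_diff Vpi_eq_Jop_Qpi Vest_def)
  moreover have "Pop P j (\<lambda>y. Vest H pk Qk (Suc j) y - Vpi P H r pk (Suc j) y) x a
      = Pop P j (Vest H pk Qk (Suc j)) x a - Pop P j (Vpi P H r pk (Suc j)) x a"
    by (intro Pop_diff j x bounded_borel_Vest bounded_borel_Vpi pk Qk r) auto
  ultimately show ?thesis by (simp add: Qpi_def iota_def)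
qed

end

end

section \<open>The filtration and the time index\<close>

definition Fgen_gens :: "'w measure \<Rightarrow> 's measure \<Rightarrow> nat \<Rightarrow> (nat \<Rightarrow> 'w \<Rightarrow> nat \<Rightarrow> 's \<Rightarrow> 'a \<Rightarrow> real)
    \<Rightarrow> (nat \<Rightarrow> nat \<Rightarrow> 'w \<Rightarrow> 's) \<Rightarrow> (nat \<Rightarrow> nat \<Rightarrow> 'w \<Rightarrow> 'a) \<Rightarrow> nat \<Rightarrow> nat \<Rightarrow> nat \<Rightarrow> 'w set set" where
  "Fgen_gens M S H R X A k h m =
     {X \<tau> i -` B \<inter> space M | \<tau> i B. \<tau> \<in> {1..<k} \<and> i \<in> {1..H} \<and> B \<in> sets S}
    \<union> {A \<tau> i -` B \<inter> space M | \<tau> i B. \<tau> \<in> {1..<k} \<and> i \<in> {1..H}}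
    \<union> {(\<lambda>w. R \<tau> w i x a) -` B \<inter> space M | \<tau> i x a B.
          \<tau> \<in> {1..k} \<and> i \<in> {1..H} \<and> x \<in> space S \<and> B \<in> sets borel}
    \<union> {X k i -` B \<inter> space M | i B. i \<in> {1..h} \<and> B \<in> sets S}
    \<union> {A k i -` B \<inter> space M | i B. i \<in> {1..h}}
    \<union> {X k (Suc h) -` B \<inter> space M | B. m = 2 \<and> h < H \<and> B \<in> sets S}"

lemma Fgen_gens_Pow: "Fgen_gens M S H R X A k h m \<subseteq> Pow (space M)"
  by (auto simp: Fgen_gens_def)

lemma space_Fgen [simp]: "space (Fgen M S H R X A k h m) = space M"
  unfolding Fgen_def Fgen_gens_def[symmetric] by (rule space_measure_of[OF Fgen_gens_Pow])

lemma sets_Fgen: "sets (Fgen M S H R X A k h m) = sigma_sets (space M) (Fgen_gens M S H R X A k h m)"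
  unfolding Fgen_def Fgen_gens_def[symmetric] by (rule sets_measure_of[OF Fgen_gens_Pow])

lemma measurable_Fgen_X:
  assumes "X \<tau> i \<in> space M \<rightarrow> space S"
    and "\<tau> \<in> {1..<k} \<and> i \<in> {1..H} \<or> \<tau> = k \<and> i \<in> {1..h} \<or> \<tau> = k \<and> i = Suc h \<and> m = 2 \<and> h < H"
  shows "X \<tau> i \<in> Fgen M S H R X A k h m \<rightarrow>\<^sub>M S"
proof (rule measurableI)
  fix B assume B: "B \<in> sets S"
  have "X \<tau> i -` B \<inter> space M \<in> Fgen_gens M S H R X A k h m"
    using assms(2)
  proof (elim disjE conjE)
    assume "\<tau> \<in> {1..<k}" "i \<in> {1..H}"
    then show ?thesis by (unfold Fgen_gens_def, intro UnI1) (use B in blast)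
  next
    assume "\<tau> = k" "i \<in> {1..h}"
    with B have "X \<tau> i -` B \<inter> space M \<in> {X k i -` B \<inter> space M | i B. i \<in> {1..h} \<and> B \<in> sets S}"
      by blast
    then show ?thesis unfolding Fgen_gens_def by (rule UnI1[OF UnI1[OF UnI2]])
  next
    assume "\<tau> = k" "i = Suc h" "m = 2" "h < H"
    with B show ?thesis unfolding Fgen_gens_def by blast
  qed
  then show "X \<tau> i -` B \<inter> space (Fgen M S H R X A k h m) \<in> sets (Fgen M S H R X A k h m)"
    unfolding sets_Fgen space_Fgen by (rule sigma_sets.Basic)
qed (use assms(1) in auto)

lemma measurable_Fgen_A:
  assumes "\<tau> \<in> {1..<k} \<and> i \<in> {1..H} \<or> \<tau> = k \<and> i \<in> {1..h}"
  shows "A \<tau> i \<in> Fgen M S H R X A k h m \<rightarrow>\<^sub>M count_space UNIV"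
proof (rule measurableI)
  fix B
  have "A \<tau> i -` B \<inter> space M \<in> Fgen_gens M S H R X A k h m"
    using assms
  proof (elim disjE conjE)
    assume "\<tau> \<in> {1..<k}" "i \<in> {1..H}"
    then have "A \<tau> i -` B \<inter> space M \<in> {A \<tau> i -` B \<inter> space M | \<tau> i B. \<tau> \<in> {1..<k} \<and> i \<in> {1..H}}"
      by blast
    then show ?thesis unfolding Fgen_gens_def by (rule UnI1[OF UnI1[OF UnI1[OF UnI1[OF UnI2]]]])
  next
    assume "\<tau> = k" "i \<in> {1..h}"
    then have "A \<tau> i -` B \<inter> space M \<in> {A k i -` B \<inter> space M | i B. i \<in> {1..h}}"
      by blast
    then show ?thesis unfolding Fgen_gens_def by (rule UnI1[OF UnI2])
  qed
  then show "A \<tau> i -` B \<inter> space (Fgen M S H R X A k h m) \<in> sets (Fgen M S H R X A k h m)"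
    unfolding sets_Fgen space_Fgen by (rule sigma_sets.Basic)
qed auto

lemma measurable_Fgen_R:
  assumes "\<tau> \<in> {1..k}" "i \<in> {1..H}" "x \<in> space S"
  shows "(\<lambda>w. R \<tau> w i x a) \<in> borel_measurable (Fgen M S H R X A k h m)"
proof (rule measurableI)
  fix B :: "real set" assume "B \<in> sets borel"
  with assms have "(\<lambda>w. R \<tau> w i x a) -` B \<inter> space M \<in> {(\<lambda>w. R \<tau> w i x a) -` B \<inter> space M | \<tau> i x a B.
      \<tau> \<in> {1..k} \<and> i \<in> {1..H} \<and> x \<in> space S \<and> B \<in> sets borel}"
    by blast
  then have "(\<lambda>w. R \<tau> w i x a) -` B \<inter> space M \<in> Fgen_gens M S H R X A k h m"
    unfolding Fgen_gens_def by (rule UnI1[OF UnI1[OF UnI1[OF UnI2]]])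
  then show "(\<lambda>w. R \<tau> w i x a) -` B \<inter> space (Fgen M S H R X A k h m) \<in> sets (Fgen M S H R X A k h m)"
    unfolding sets_Fgen space_Fgen by (rule sigma_sets.Basic)
qed auto

lemma sets_Fgen_le:
  assumes space: "space G = space M"
    and X: "\<And>\<tau> i. \<tau> \<in> {1..<k} \<Longrightarrow> i \<in> {1..H} \<Longrightarrow> X \<tau> i \<in> G \<rightarrow>\<^sub>M S"
    and A: "\<And>\<tau> i. \<tau> \<in> {1..<k} \<Longrightarrow> i \<in> {1..H} \<Longrightarrow> A \<tau> i \<in> G \<rightarrow>\<^sub>M count_space UNIV"
    and R: "\<And>\<tau> i x a. \<tau> \<in> {1..k} \<Longrightarrow> i \<in> {1..H} \<Longrightarrow> x \<in> space S \<Longrightarrow>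
              (\<lambda>w. R \<tau> w i x a) \<in> borel_measurable G"
    and Xk: "\<And>i. i \<in> {1..h} \<Longrightarrow> X k i \<in> G \<rightarrow>\<^sub>M S"
    and Ak: "\<And>i. i \<in> {1..h} \<Longrightarrow> A k i \<in> G \<rightarrow>\<^sub>M count_space UNIV"
    and Xnext: "m = 2 \<Longrightarrow> h < H \<Longrightarrow> X k (Suc h) \<in> G \<rightarrow>\<^sub>M S"
  shows "sets (Fgen M S H R X A k h m) \<subseteq> sets G"
proof -
  have "Fgen_gens M S H R X A k h m \<subseteq> sets G"
    unfolding Fgen_gens_def
    by (intro Un_least subsetI; elim CollectE exE conjE)
       (use measurable_sets[OF X] measurable_sets[OF A] measurable_sets[OF R]
          measurable_sets[OF Xk] measurable_sets[OF Ak] measurable_sets[OF Xnext] space in auto)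
  then show ?thesis
    unfolding sets_Fgen space[symmetric] by (rule sets.sigma_sets_subset)
qed

definition tidx_episode :: "nat \<Rightarrow> nat \<Rightarrow> nat" where
  "tidx_episode H t = (t - 1) div (2 * H) + 1"

definition tidx_step :: "nat \<Rightarrow> nat \<Rightarrow> nat" where
  "tidx_step H t = (t - 1) mod (2 * H) div 2 + 1"

definition tidx_half :: "nat \<Rightarrow> nat" where
  "tidx_half t = (t - 1) mod 2 + 1"

lemma Ft_eq_Fgen:
  "Ft M S H R X A t = Fgen M S H R X A (tidx_episode H t) (tidx_step H t) (tidx_half t)"
  by (simp add: Ft_def tidx_episode_def tidx_step_def tidx_half_def)

lemma tidx_decode:
  assumes "1 \<le> t"
  shows "tidx H (tidx_episode H t) (tidx_step H t) (tidx_half t) = t"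
proof -
  have "(t - 1) mod (2 * H) mod 2 = (t - 1) mod 2" by (simp add: mod_mod_cancel)
  then have "tidx H (tidx_episode H t) (tidx_step H t) (tidx_half t)
      = (t - 1) div (2 * H) * (2 * H) + ((t - 1) mod (2 * H) div 2 * 2 + (t - 1) mod (2 * H) mod 2) + 1"
    by (simp add: tidx_def tidx_episode_def tidx_step_def tidx_half_def)
  also have "\<dots> = t" using assms by (simp only: div_mult_mod_eq)
  finally show ?thesis .
qed

lemma decode_tidx:
  assumes k: "1 \<le> k" and h: "h \<in> {1..H}" and m: "m \<in> {1..2}"
  shows "tidx_episode H (tidx H k h m) = k" "tidx_step H (tidx H k h m) = h"
    "tidx_half (tidx H k h m) = m"
proof -
  define r where "r = (m - 1) + (h - 1) * 2"
  have "m - 1 < 2" using m by auto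
  then have r: "r < 2 * H" "r div 2 = h - 1" "r mod 2 = m - 1"
    using h unfolding r_def by (simp_all only: div_mult_self1 mod_mult_self1) auto
  have t: "tidx H k h m - 1 = r + (k - 1) * (2 * H)" using m by (simp add: tidx_def r_def)
  have "(tidx H k h m - 1) div (2 * H) = k - 1" "(tidx H k h m - 1) mod (2 * H) = r"
    unfolding t using r(1) by simp_all
  moreover have "(tidx H k h m - 1) mod 2 = m - 1"
    unfolding t using r(3) mod_mult_self1[of r "(k - 1) * H" 2] by (simp add: ac_simps)
  ultimately show "tidx_episode H (tidx H k h m) = k" "tidx_step H (tidx H k h m) = h"
    "tidx_half (tidx H k h m) = m"
    using k h m r(2) by (simp_all add: tidx_episode_def tidx_step_def tidx_half_def)
qed

lemma Ft_tidx:
  "1 \<le> k \<Longrightarrow> h \<in> {1..H} \<Longrightarrow> m \<in> {1..2} \<Longrightarrow>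
   Ft M S H R X A (tidx H k h m) = Fgen M S H R X A k h m"
  unfolding Ft_eq_Fgen by (simp add: decode_tidx)

lemma tidx_decode_range:
  assumes H: "1 \<le> H" and t: "t \<in> {1..2 * H * K}"
  shows "tidx_episode H t \<in> {1..K}" "tidx_step H t \<in> {1..H}" "tidx_half t \<in> {1..2}"
proof -
  have "t - 1 < K * (2 * H)" using t by (auto simp: algebra_simps)
  then show "tidx_episode H t \<in> {1..K}"
    unfolding tidx_episode_def by (auto dest: less_mult_imp_div_less)
  have "(t - 1) mod (2 * H) < H * 2" using H by (simp add: mult.commute)
  then show "tidx_step H t \<in> {1..H}"
    unfolding tidx_step_def by (auto dest: less_mult_imp_div_less)
  show "tidx_half t \<in> {1..2}" unfolding tidx_half_def by auto
qed

lemma tidx_inj: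
  assumes "1 \<le> k" "h \<in> {1..H}" "m \<in> {1..2}" "1 \<le> k'" "h' \<in> {1..H}" "m' \<in> {1..2}"
    and "tidx H k h m = tidx H k' h' m'"
  shows "k = k'" "h = h'" "m = m'"
  using decode_tidx[of k h H m] decode_tidx[of k' h' H m'] assms by metis+

lemma tidx_le_last:
  "1 \<le> k \<Longrightarrow> k \<le> K \<Longrightarrow> 1 \<le> h \<Longrightarrow> h \<le> H \<Longrightarrow> m \<le> 2 \<Longrightarrow> tidx H k h m \<le> tidx H K H 2"
  unfolding tidx_def by (intro add_mono mult_right_mono) auto

lemma tidx_range:
  assumes "k \<in> {1..K}" "h \<in> {1..H}" "m \<in> {1..2}"
  shows "tidx H k h m \<in> {1..2 * H * K}"
proof -
  have "tidx H K H 2 = 2 * H * K" using assms by (cases K; cases H) (auto simp: tidx_def algebra_simps)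
  then show ?thesis using assms tidx_le_last[of k K h H m] by (auto simp: tidx_def)
qed

lemma tidx_less_imp_lex:
  assumes "1 \<le> k" "h \<in> {1..H}" "m \<in> {1..2}" "h' \<in> {1..H}" "m' \<in> {1..2}"
    and less: "tidx H k' h' m' < tidx H k h m"
  shows "k' < k \<or> k' = k \<and> h' < h \<or> k' = k \<and> h' = h \<and> m' < m"
proof (cases k' k rule: linorder_cases)
  case greater
  then have "k * (2 * H) \<le> (k' - 1) * (2 * H)" by (intro mult_right_mono) auto
  moreover have "(k - 1) * (2 * H) + 2 * H = k * (2 * H)" using \<open>1 \<le> k\<close> by (cases k) auto
  moreover have "(h - 1) * 2 + m \<le> 2 * H" using assms by auto
  ultimately show ?thesis using less unfolding tidx_def by linarith
next
  case equal
  then show ?thesis using assms unfolding tidx_def by auto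
qed simp

lemma Mart_Suc:
  assumes H: "1 \<le> H" and t: "Suc t \<le> 2 * H * K"
  shows "Mart P H K R Pol Q X A (Suc t) w = Mart P H K R Pol Q X A t w
    + Dterm P H R Pol Q X A (tidx_episode H (Suc t)) (tidx_step H (Suc t)) (tidx_half (Suc t)) w"
proof -
  let ?I = "{1..K} \<times> {1..H} \<times> {1..2::nat}"
  let ?Z = "\<lambda>t. {z \<in> ?I. case z of (k, h, m) \<Rightarrow> tidx H k h m \<le> t}"
  let ?z = "(tidx_episode H (Suc t), tidx_step H (Suc t), tidx_half (Suc t))"
  have z: "?z \<in> ?I" using tidx_decode_range[OF H, of "Suc t" K] t by auto
  have tz: "tidx H (tidx_episode H (Suc t)) (tidx_step H (Suc t)) (tidx_half (Suc t)) = Suc t"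
    by (rule tidx_decode) simp
  have "?Z (Suc t) = insert ?z (?Z t)"
  proof (intro equalityI subsetI)
    fix z assume z': "z \<in> ?Z (Suc t)"
    obtain k h m where [simp]: "z = (k, h, m)" by (cases z)
    show "z \<in> insert ?z (?Z t)"
    proof (cases "tidx H k h m = Suc t")
      case True
      then show ?thesis using z z' tidx_inj[of k h H m] tz by auto
    qed (use z' in auto)
  qed (use z tz in auto)
  moreover have "?z \<notin> ?Z t" using tz by auto
  ultimately show ?thesis unfolding Mart_def by (simp add: add.commute)
qed

lemma Mart_last:
  "Mart P H K R Pol Q X A (tidx H K H 2) w
     = (\<Sum>k=1..K. \<Sum>h=1..H. D1 P H R Pol Q X A k h w + D2 P H R Pol Q X A k h w)"
proof -
  let ?I = "{1..K} \<times> {1..H} \<times> {1..2::nat}"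
  have "{z \<in> ?I. case z of (k, h, m) \<Rightarrow> tidx H k h m \<le> tidx H K H 2} = ?I"
    by (auto intro!: tidx_le_last)
  then have "Mart P H K R Pol Q X A (tidx H K H 2) w
      = (\<Sum>k=1..K. \<Sum>h=1..H. \<Sum>m\<in>{1..2::nat}. Dterm P H R Pol Q X A k h m w)"
    unfolding Mart_def by (simp add: sum.cartesian_product case_prod_beta')
  also have "{1..2::nat} = {1, 2}" by auto
  finally show ?thesis by (simp add: Dterm_def)
qed

lemma Dterm_1: "Dterm P H R Pol Q X A k h 1 = D1 P H R Pol Q X A k h"
  by (rule ext) (simp add: Dterm_def)

lemma Dterm_2: "Dterm P H R Pol Q X A k h 2 = D2 P H R Pol Q X A k h"
  by (rule ext) (simp add: Dterm_def)

locale oppo =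
  fixes M :: "'w measure" and S :: "'s measure"
    and P :: "nat \<Rightarrow> 's \<Rightarrow> 'a::finite \<Rightarrow> 's measure"
    and H K :: nat and x1 :: 's
    and R :: "nat \<Rightarrow> 'w \<Rightarrow> nat \<Rightarrow> 's \<Rightarrow> 'a \<Rightarrow> real"
    and Pol :: "nat \<Rightarrow> 'w \<Rightarrow> nat \<Rightarrow> 's \<Rightarrow> 'a pmf"
    and Q :: "nat \<Rightarrow> 'w \<Rightarrow> nat \<Rightarrow> 's \<Rightarrow> 'a \<Rightarrow> real"
    and X :: "nat \<Rightarrow> nat \<Rightarrow> 'w \<Rightarrow> 's"
    and A :: "nat \<Rightarrow> nat \<Rightarrow> 'w \<Rightarrow> 'a"
  assumes M: "prob_space M"
    and kernel_prob: "\<And>h x a. h \<in> {1..H} \<Longrightarrow> x \<in> space S \<Longrightarrow> prob_space (P h x a)"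
    and kernel_meas: "\<And>h a. h \<in> {1..H} \<Longrightarrow> (\<lambda>x. P h x a) \<in> S \<rightarrow>\<^sub>M subprob_algebra S"
    and x1: "x1 \<in> space S"
    and init: "\<And>k w. k \<in> {1..K} \<Longrightarrow> w \<in> space M \<Longrightarrow> X k 1 w = x1"
    and X_meas: "\<And>k h. k \<in> {1..K} \<Longrightarrow> h \<in> {1..H} \<Longrightarrow> X k h \<in> M \<rightarrow>\<^sub>M S"
    and A_meas: "\<And>k h. k \<in> {1..K} \<Longrightarrow> h \<in> {1..H} \<Longrightarrow> A k h \<in> M \<rightarrow>\<^sub>M count_space UNIV"
    and R_meas: "\<And>k h x a. k \<in> {1..K} \<Longrightarrow> h \<in> {1..H} \<Longrightarrow> x \<in> space S \<Longrightarrow>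
                   (\<lambda>w. R k w h x a) \<in> borel_measurable M"
    and R_joint: "\<And>k h a. k \<in> {1..K} \<Longrightarrow> h \<in> {1..H} \<Longrightarrow>
                   (\<lambda>(w, x). R k w h x a) \<in> borel_measurable (Fgen M S H R X A k 0 2 \<Otimes>\<^sub>M S)"
    and R_range: "\<And>k h w x a. k \<in> {1..K} \<Longrightarrow> h \<in> {1..H} \<Longrightarrow> w \<in> space M \<Longrightarrow> x \<in> space S \<Longrightarrow>
                   0 \<le> R k w h x a \<and> R k w h x a \<le> 1"
    and Pi_joint: "\<And>k h a. k \<in> {1..K} \<Longrightarrow> h \<in> {1..H} \<Longrightarrow>
                   (\<lambda>(w, x). pmf (Pol k w h x) a) \<in> borel_measurable (Fgen M S H R X A k 0 2 \<Otimes>\<^sub>M S)"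
    and Q_joint: "\<And>k h a. k \<in> {1..K} \<Longrightarrow> h \<in> {1..H} \<Longrightarrow>
                   (\<lambda>(w, x). Q k w h x a) \<in> borel_measurable (Fgen M S H R X A k 0 2 \<Otimes>\<^sub>M S)"
    and Q_range: "\<And>k h w x a. k \<in> {1..K} \<Longrightarrow> h \<in> {1..H} \<Longrightarrow> w \<in> space M \<Longrightarrow> x \<in> space S \<Longrightarrow>
                   0 \<le> Q k w h x a \<and> Q k w h x a \<le> real (H - h + 1)"
    and act: "\<And>k h a. k \<in> {1..K} \<Longrightarrow> h \<in> {1..H} \<Longrightarrow>
               AE w in M. real_cond_exp M (Fgen M S H R X A k (h - 1) 2) (\<lambda>w. indicator {a} (A k h w)) w
                          = pmf (Pol k w h (X k h w)) a"
    and trans: "\<And>k h g B. k \<in> {1..K} \<Longrightarrow> h \<in> {1..<H} \<Longrightarrow>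
               g \<in> borel_measurable (Fgen M S H R X A k h 1 \<Otimes>\<^sub>M S) \<Longrightarrow> (\<forall>z. \<bar>g z\<bar> \<le> B) \<Longrightarrow>
               AE w in M. real_cond_exp M (Fgen M S H R X A k h 1) (\<lambda>w. g (w, X k (Suc h) w)) w
                          = (\<integral>y. g (w, y) \<partial>(P h (X k h w) (A k h w)))"

sublocale oppo \<subseteq> finite_horizon_mdp S P H
  by (rule finite_horizon_mdp.intro) (fact kernel_prob kernel_meas)+

context oppo
begin

abbreviation FG where "FG k h m \<equiv> Fgen M S H R X A k h m"

lemma X_space: "k \<in> {1..K} \<Longrightarrow> h \<in> {1..H} \<Longrightarrow> w \<in> space M \<Longrightarrow> X k h w \<in> space S"
  using measurable_space[OF X_meas] by blast

lemma measurable_FG_X: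
  assumes "\<tau> \<in> {1..K}" "i \<in> {1..H}" "\<tau> < k \<or> \<tau> = k \<and> i \<le> h \<or> \<tau> = k \<and> i = Suc h \<and> m = 2"
  shows "X \<tau> i \<in> FG k h m \<rightarrow>\<^sub>M S"
  using assms X_space by (intro measurable_Fgen_X) auto

lemma measurable_FG_A:
  assumes "\<tau> \<in> {1..K}" "i \<in> {1..H}" "\<tau> < k \<or> \<tau> = k \<and> i \<le> h"
  shows "A \<tau> i \<in> FG k h m \<rightarrow>\<^sub>M count_space UNIV"
  using assms by (intro measurable_Fgen_A) auto

lemma subalgebra_FG: "k \<in> {1..K} \<Longrightarrow> h \<le> H \<Longrightarrow> subalgebra M (FG k h m)"
  unfolding subalgebra_def
  by (intro conjI sets_Fgen_le X_meas A_meas R_meas) auto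

lemma sets_FG_mono:
  assumes "1 \<le> k" "k' \<le> K" "h \<le> H"
    and "k < k' \<or> k = k' \<and> h < h' \<or> k = k' \<and> h = h' \<and> (m = 2 \<longrightarrow> m' = 2)"
  shows "sets (FG k h m) \<subseteq> sets (FG k' h' m')"
  using assms
  by (intro sets_Fgen_le measurable_FG_X measurable_FG_A measurable_Fgen_R) auto

lemma subalgebra_Ft: "1 \<le> H \<Longrightarrow> t \<in> {1..2 * H * K} \<Longrightarrow> subalgebra M (Ft M S H R X A t)"
  unfolding Ft_eq_Fgen using tidx_decode_range by (intro subalgebra_FG) auto

lemma sets_Ft_mono:
  assumes H: "1 \<le> H" and st: "s \<le> t" and s: "s \<in> {1..2 * H * K}" and t: "t \<in> {1..2 * H * K}"
  shows "sets (Ft M S H R X A s) \<subseteq> sets (Ft M S H R X A t)"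
proof (cases "s = t")
  case False
  let ?k = "tidx_episode H s" and ?h = "tidx_step H s" and ?m = "tidx_half s"
  let ?k' = "tidx_episode H t" and ?h' = "tidx_step H t" and ?m' = "tidx_half t"
  have "tidx H ?k ?h ?m < tidx H ?k' ?h' ?m'"
    using st s t False by (simp add: tidx_decode)
  then have "?k < ?k' \<or> ?k = ?k' \<and> ?h < ?h' \<or> ?k = ?k' \<and> ?h = ?h' \<and> ?m < ?m'"
    using tidx_decode_range[OF H s] tidx_decode_range[OF H t] by (intro tidx_less_imp_lex) auto
  then show ?thesis
    unfolding Ft_eq_Fgen using tidx_decode_range[OF H s] tidx_decode_range[OF H t]
    by (intro sets_FG_mono) auto
qed simp

lemma sets_FG_le_Ft:
  assumes "1 \<le> H" "k \<in> {1..K}" "h \<in> {1..H}" "m \<in> {1..2}" "tidx H k h m \<le> t" "t \<le> 2 * H * K"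
  shows "sets (FG k h m) \<subseteq> sets (Ft M S H R X A t)"
proof -
  have "tidx H k h m \<in> {1..2 * H * K}" using assms by (intro tidx_range) auto
  moreover have "Ft M S H R X A (tidx H k h m) = FG k h m" by (rule Ft_tidx) (use assms in auto)
  ultimately show ?thesis using assms sets_Ft_mono[of "tidx H k h m" t] by auto
qed

lemma bounded_borel2_R:
  assumes k: "k \<in> {1..K}" and h: "h \<in> {1..H}" and w: "w \<in> space M"
  shows "bounded_borel2 S (R k w h)"
  unfolding bounded_borel2_def using measurable_Pair2[OF R_joint[OF k h], of w] w R_range[OF k h w]
  by (intro conjI allI exI[of _ 1]) (auto simp: abs_le_iff)

lemma abs_Q_le:
  assumes k: "k \<in> {1..K}" and h: "h \<in> {1..H}" and w: "w \<in> space M" and y: "y \<in> space S"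
  shows "\<bar>Q k w h y b\<bar> \<le> H"
  using Q_range[OF k h w y, of b] h by (auto simp: of_nat_diff)

lemma bounded_borel2_Q:
  assumes k: "k \<in> {1..K}" and h: "h \<in> {1..H}" and w: "w \<in> space M"
  shows "bounded_borel2 S (Q k w h)"
  unfolding bounded_borel2_def using measurable_Pair2[OF Q_joint[OF k h], of w] w abs_Q_le[OF k h w]
  by auto

lemma Pol_measurable:
  assumes k: "k \<in> {1..K}" and h: "h \<in> {1..H}" and w: "w \<in> space M"
  shows "(\<lambda>x. pmf (Pol k w h x) a) \<in> borel_measurable S"
  using measurable_Pair2[OF Pi_joint[OF k h], of w] w by simp

lemma measurable_pair_Vpi:
  "k \<in> {1..K} \<Longrightarrow> 1 \<le> j \<Longrightarrow>
   (\<lambda>(w, y). Vpi P H (R k w) (Pol k w) j y) \<in> borel_measurable (FG k 0 2 \<Otimes>\<^sub>M S)"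
  unfolding Vpi_def by (intro Vtg_measurable_pair R_joint Pi_joint) auto

lemma abs_Vpi_le:
  assumes "k \<in> {1..K}" "w \<in> space M" "y \<in> space S" "1 \<le> j"
  shows "\<bar>Vpi P H (R k w) (Pol k w) j y\<bar> \<le> H"
proof -
  have "\<bar>Vtg P H (R k w) (Pol k w) (Suc H - j) y\<bar> \<le> real (Suc H - j) * 1"
    using assms R_range
    by (intro Vtg_abs_le bounded_borel2_R Pol_measurable) (auto simp: abs_le_iff)
  then show ?thesis using assms unfolding Vpi_def by simp
qed

lemma measurable_pair_Qpi:
  "k \<in> {1..K} \<Longrightarrow> h \<in> {1..H} \<Longrightarrow>
   (\<lambda>(w, y). Qpi P H (R k w) (Pol k w) h y b) \<in> borel_measurable (FG k 0 2 \<Otimes>\<^sub>M S)"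
  unfolding Qpi_def using R_joint Pop_measurable_pair[OF _ measurable_pair_Vpi]
  by (simp add: case_prod_beta')

lemma abs_Qpi_le:
  assumes k: "k \<in> {1..K}" and h: "h \<in> {1..H}" and w: "w \<in> space M" and y: "y \<in> space S"
  shows "\<bar>Qpi P H (R k w) (Pol k w) h y b\<bar> \<le> 1 + H"
proof -
  have "Vpi P H (R k w) (Pol k w) (Suc h) \<in> borel_measurable S"
    using measurable_Pair2[OF measurable_pair_Vpi[OF k], of "Suc h" w] w by simp
  then have "\<bar>Pop P h (Vpi P H (R k w) (Pol k w) (Suc h)) y b\<bar> \<le> H"
    by (rule Pop_abs_le[OF h y]) (simp add: abs_Vpi_le[OF k w])
  then show ?thesis
    unfolding Qpi_def using R_range[OF k h w y, of b] by linarith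
qed

lemma measurable_pair_Vest:
  assumes k: "k \<in> {1..K}" and j: "1 \<le> j"
  shows "(\<lambda>(w, y). Vest H (Pol k w) (Q k w) j y) \<in> borel_measurable (FG k 0 2 \<Otimes>\<^sub>M S)"
proof (cases "j \<in> {1..H}")
  case True
  then show ?thesis
    unfolding Vest_def using True Pi_joint[OF k True] Q_joint[OF k True]
    by (simp add: Jop_measurable_pair[where pol="Pol k" and F="\<lambda>w. Q k w j"])
qed (use j in \<open>auto simp: Vest_def\<close>)

lemma abs_Vest_le:
  "k \<in> {1..K} \<Longrightarrow> w \<in> space M \<Longrightarrow> y \<in> space S \<Longrightarrow> 1 \<le> j \<Longrightarrow> \<bar>Vest H (Pol k w) (Q k w) j y\<bar> \<le> H"
  unfolding Vest_def by (auto intro!: Jop_abs_le abs_Q_le)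

definition Qgap :: "nat \<Rightarrow> 'w \<Rightarrow> nat \<Rightarrow> 's \<Rightarrow> 'a \<Rightarrow> real" where
  "Qgap k w h y b = Q k w h y b - Qpi P H (R k w) (Pol k w) h y b"

definition Vgap :: "nat \<Rightarrow> 'w \<Rightarrow> nat \<Rightarrow> 's \<Rightarrow> real" where
  "Vgap k w h y = Vest H (Pol k w) (Q k w) h y - Vpi P H (R k w) (Pol k w) h y"

lemma D1_eq:
  "D1 P H R Pol Q X A k h w = Jop (Pol k w) h (Qgap k w h) (X k h w) - Qgap k w h (X k h w) (A k h w)"
  by (simp add: D1_def Qgap_def[abs_def])

lemma D2_eq:
  "D2 P H R Pol Q X A k h w
     = Pop P h (Vgap k w (Suc h)) (X k h w) (A k h w) - Vgap k w (Suc h) (X k (Suc h) w)"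
  by (simp add: D2_def Vgap_def[abs_def])

lemma D2_last: "D2 P H R Pol Q X A k H w = 0"
  by (simp add: D2_def Vest_beyond_horizon Vpi_beyond_horizon Pop_def)

lemma measurable_pair_Qgap:
  "k \<in> {1..K} \<Longrightarrow> h \<in> {1..H} \<Longrightarrow> (\<lambda>(w, y). Qgap k w h y b) \<in> borel_measurable (FG k 0 2 \<Otimes>\<^sub>M S)"
  using Q_joint measurable_pair_Qpi unfolding Qgap_def case_prod_beta' by (intro borel_measurable_diff)

lemma abs_Qgap_le:
  "k \<in> {1..K} \<Longrightarrow> h \<in> {1..H} \<Longrightarrow> w \<in> space M \<Longrightarrow> y \<in> space S \<Longrightarrow> \<bar>Qgap k w h y b\<bar> \<le> 1 + 2 * H"
  using abs_Q_le[of k h w y b] abs_Qpi_le[of k h w y b] unfolding Qgap_def by linarith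

lemma measurable_pair_Vgap:
  "k \<in> {1..K} \<Longrightarrow> 1 \<le> j \<Longrightarrow> (\<lambda>(w, y). Vgap k w j y) \<in> borel_measurable (FG k 0 2 \<Otimes>\<^sub>M S)"
  using measurable_pair_Vest measurable_pair_Vpi unfolding Vgap_def case_prod_beta'
  by (intro borel_measurable_diff)

lemma abs_Vgap_le:
  "k \<in> {1..K} \<Longrightarrow> w \<in> space M \<Longrightarrow> y \<in> space S \<Longrightarrow> 1 \<le> j \<Longrightarrow> \<bar>Vgap k w j y\<bar> \<le> 2 * H"
  using abs_Vest_le[of k w y j] abs_Vpi_le[of k w y j] unfolding Vgap_def by linarith

lemma measurable_Pop_Vgap:
  assumes k: "k \<in> {1..K}" and h: "h \<in> {1..H}" and G: "sets (FG k 0 2) \<subseteq> sets G" "space G = space M"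
    and X: "X k h \<in> G \<rightarrow>\<^sub>M S" and A: "A k h \<in> G \<rightarrow>\<^sub>M count_space UNIV"
  shows "(\<lambda>w. Pop P h (Vgap k w (Suc h)) (X k h w) (A k h w)) \<in> borel_measurable G"
proof -
  have "(\<lambda>(w, x). Pop P h (Vgap k w (Suc h)) x a) \<in> borel_measurable (FG k 0 2 \<Otimes>\<^sub>M S)" for a
    by (rule Pop_measurable_pair[OF h measurable_pair_Vgap[OF k]]) simp
  from measurable_eval_pair_action[OF this G(1) _ X A] show ?thesis by (simp add: G(2))
qed

lemma abs_Pop_Vgap_le:
  assumes k: "k \<in> {1..K}" and h: "h \<in> {1..H}" and w: "w \<in> space M" and x: "x \<in> space S"
  shows "\<bar>Pop P h (Vgap k w (Suc h)) x a\<bar> \<le> 2 * H"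
proof (rule Pop_abs_le[OF h x])
  show "Vgap k w (Suc h) \<in> borel_measurable S"
    using measurable_Pair2[OF measurable_pair_Vgap[OF k], of "Suc h" w] w by simp
qed (rule abs_Vgap_le[OF k w]; simp)

lemma measurable_Jop_Qgap:
  assumes k: "k \<in> {1..K}" and h: "h \<in> {1..H}" and G: "sets (FG k 0 2) \<subseteq> sets G" "space G = space M"
    and X: "X k h \<in> G \<rightarrow>\<^sub>M S"
  shows "(\<lambda>w. Jop (Pol k w) h (Qgap k w h) (X k h w)) \<in> borel_measurable G"
proof -
  have "(\<lambda>(w, y). Jop (Pol k w) h (Qgap k w h) y) \<in> borel_measurable (FG k 0 2 \<Otimes>\<^sub>M S)"
    using Pi_joint[OF k h] measurable_pair_Qgap[OF k h]
    by (simp add: Jop_measurable_pair[where pol="Pol k" and F="\<lambda>w. Qgap k w h"])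
  from measurable_eval_pair[OF this G(1) _ X] show ?thesis by (simp add: G(2))
qed

lemma measurable_Qgap_eval:
  assumes k: "k \<in> {1..K}" and h: "h \<in> {1..H}" and G: "sets (FG k 0 2) \<subseteq> sets G" "space G = space M"
    and X: "X k h \<in> G \<rightarrow>\<^sub>M S"
  shows "(\<lambda>w. Qgap k w h (X k h w) b) \<in> borel_measurable G"
  using measurable_eval_pair[OF measurable_pair_Qgap[OF k h] G(1) _ X] by (simp add: G(2))

lemma measurable_D1:
  assumes k: "k \<in> {1..K}" and h: "h \<in> {1..H}" and G: "sets (FG k 0 2) \<subseteq> sets G" "space G = space M"
    and X: "X k h \<in> G \<rightarrow>\<^sub>M S" and A: "A k h \<in> G \<rightarrow>\<^sub>M count_space UNIV"
  shows "D1 P H R Pol Q X A k h \<in> borel_measurable G"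
  unfolding D1_eq[abs_def]
  by (intro borel_measurable_diff measurable_Jop_Qgap[OF k h G X]
      measurable_compose_countable[OF measurable_Qgap_eval[OF k h G X] A])

lemma measurable_D2:
  assumes k: "k \<in> {1..K}" and h: "h \<in> {1..H}"
  shows "D2 P H R Pol Q X A k h \<in> borel_measurable (FG k h 2)"
proof (cases "h = H")
  case True
  have "D2 P H R Pol Q X A k H = (\<lambda>w. 0)" by (rule ext) (rule D2_last)
  then show ?thesis using True by simp
next
  case False
  have G: "sets (FG k 0 2) \<subseteq> sets (FG k h 2)" using k h by (intro sets_FG_mono) auto
  have "(\<lambda>w. Pop P h (Vgap k w (Suc h)) (X k h w) (A k h w)) \<in> borel_measurable (FG k h 2)"
    using k h by (intro measurable_Pop_Vgap[OF k h G] measurable_FG_X measurable_FG_A) auto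
  moreover have "X k (Suc h) \<in> FG k h 2 \<rightarrow>\<^sub>M S"
    using k h False by (intro measurable_FG_X) auto
  from measurable_eval_pair[OF measurable_pair_Vgap[OF k] G _ this]
  have "(\<lambda>w. Vgap k w (Suc h) (X k (Suc h) w)) \<in> borel_measurable (FG k h 2)" by simp
  ultimately show ?thesis unfolding D2_eq[abs_def] by (rule borel_measurable_diff)
qed

lemma abs_D1_le:
  assumes "k \<in> {1..K}" "h \<in> {1..H}" "w \<in> space M"
  shows "\<bar>D1 P H R Pol Q X A k h w\<bar> \<le> 2 + 4 * H"
proof -
  have "\<bar>Jop (Pol k w) h (Qgap k w h) (X k h w)\<bar> \<le> 1 + 2 * H"
    using assms by (intro Jop_abs_le abs_Qgap_le X_space)
  moreover have "\<bar>Qgap k w h (X k h w) (A k h w)\<bar> \<le> 1 + 2 * H"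
    using assms by (intro abs_Qgap_le X_space)
  ultimately show ?thesis unfolding D1_eq by linarith
qed

lemma abs_D2_le:
  assumes k: "k \<in> {1..K}" and h: "h \<in> {1..H}" and w: "w \<in> space M"
  shows "\<bar>D2 P H R Pol Q X A k h w\<bar> \<le> 2 + 4 * H"
proof (cases "h = H")
  case False
  have "\<bar>Pop P h (Vgap k w (Suc h)) (X k h w) (A k h w)\<bar> \<le> 2 * H"
    using assms by (intro abs_Pop_Vgap_le X_space)
  moreover have "\<bar>Vgap k w (Suc h) (X k (Suc h) w)\<bar> \<le> 2 * H"
    using assms False by (intro abs_Vgap_le X_space) auto
  ultimately show ?thesis unfolding D2_eq by linarith
qed (simp add: D2_last)

lemma measurable_Dterm:
  assumes k: "k \<in> {1..K}" and h: "h \<in> {1..H}" and m: "m \<in> {1..2}"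
  shows "Dterm P H R Pol Q X A k h m \<in> borel_measurable (FG k h m)"
proof (cases "m = 1")
  case True
  have "sets (FG k 0 2) \<subseteq> sets (FG k h 1)" using k h by (intro sets_FG_mono) auto
  then have "D1 P H R Pol Q X A k h \<in> borel_measurable (FG k h 1)"
    using k h by (intro measurable_D1 measurable_FG_X measurable_FG_A) auto
  then show ?thesis unfolding True Dterm_1 .
next
  case False
  with m have "m = 2" by auto
  show ?thesis unfolding \<open>m = 2\<close> Dterm_2 by (rule measurable_D2[OF k h])
qed

lemma integrable_Dterm:
  assumes k: "k \<in> {1..K}" and h: "h \<in> {1..H}" and m: "m \<in> {1..2}"
  shows "integrable M (Dterm P H R Pol Q X A k h m)"
proof -
  interpret prob_space M by (rule M)
  have "Dterm P H R Pol Q X A k h m \<in> borel_measurable M"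
    using measurable_from_subalg[OF subalgebra_FG measurable_Dterm[OF k h m]] k h by simp
  then show ?thesis
    using abs_D1_le[OF k h] abs_D2_le[OF k h] unfolding Dterm_def
    by (intro integrable_const_bound[where B="2 + 4 * H"] AE_I2) auto
qed

lemma cond_exp_D1:
  assumes k: "k \<in> {1..K}" and h: "h \<in> {1..H}"
  shows "AE w in M. real_cond_exp M (FG k (h - 1) 2) (D1 P H R Pol Q X A k h) w = 0"
proof -
  interpret prob_space M by (rule M)
  let ?G = "FG k (h - 1) 2"
  have sub: "subalgebra M ?G" using k h by (intro subalgebra_FG) auto
  interpret sigma_finite_subalgebra M ?G by (rule sigma_finite_subalgebra[OF sub])
  have G0: "sets (FG k 0 2) \<subseteq> sets ?G" using k h by (intro sets_FG_mono) auto
  have X: "X k h \<in> ?G \<rightarrow>\<^sub>M S" using k h by (intro measurable_FG_X) auto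
  define J where "J w = Jop (Pol k w) h (Qgap k w h) (X k h w)" for w
  have J: "J \<in> borel_measurable ?G"
    unfolding J_def by (rule measurable_Jop_Qgap[OF k h G0 _ X]) simp
  have Q: "(\<lambda>w. Qgap k w h (X k h w) b) \<in> borel_measurable ?G" for b
    by (rule measurable_Qgap_eval[OF k h G0 _ X]) simp
  have Qb: "\<bar>Qgap k w h (X k h w) b\<bar> \<le> 1 + 2 * H" if "w \<in> space M" for w b
    using that k h by (intro abs_Qgap_le X_space)
  have intJ: "integrable M J"
    using measurable_from_subalg[OF sub J] Qb unfolding J_def
    by (intro integrable_const_bound[where B="1 + 2 * H"] AE_I2) (auto intro: Jop_abs_le)
  have intQ: "integrable M (\<lambda>w. Qgap k w h (X k h w) (A k h w))"
    using measurable_compose_countable[OF measurable_from_subalg[OF sub Q] A_meas[OF k h]] Qb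
    by (intro integrable_const_bound[where B="1 + 2 * H"] AE_I2) auto
  have "AE w in M. real_cond_exp M ?G (D1 P H R Pol Q X A k h) w
      = real_cond_exp M ?G J w - real_cond_exp M ?G (\<lambda>w. Qgap k w h (X k h w) (A k h w)) w"
    unfolding D1_eq[abs_def] J_def[symmetric] by (rule real_cond_exp_diff[OF intJ intQ])
  moreover have "AE w in M. real_cond_exp M ?G J w = J w"
    by (rule real_cond_exp_F_meas[OF intJ J])
  moreover have "AE w in M. real_cond_exp M ?G (\<lambda>w. Qgap k w h (X k h w) (A k h w)) w
      = (\<Sum>b\<in>UNIV. Qgap k w h (X k h w) b * pmf (Pol k w h (X k h w)) b)"
    by (rule real_cond_exp_eval_finite[OF sub Q Qb A_meas[OF k h] act[OF k h]])
  ultimately show ?thesis by eventually_elim (simp add: J_def Jop_def mult.commute)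
qed

lemma cond_exp_Vgap_next:
  assumes k: "k \<in> {1..K}" and h: "h \<in> {1..<H}"
  shows "AE w in M. real_cond_exp M (FG k h 1) (\<lambda>w. Vgap k w (Suc h) (X k (Suc h) w)) w
    = Pop P h (Vgap k w (Suc h)) (X k h w) (A k h w)"
proof -
  let ?G = "FG k h 1"
  have sub: "subalgebra M ?G" using k h by (intro subalgebra_FG) auto
  interpret prob_space M by (rule M)
  interpret sigma_finite_subalgebra M ?G by (rule sigma_finite_subalgebra[OF sub])
  have G0: "sets (FG k 0 2) \<subseteq> sets ?G" using k h by (intro sets_FG_mono) auto
  \<comment> \<open>The transition hypothesis needs a globally bounded integrand, hence the extension by 0.\<close>
  define g where "g z = (if fst z \<in> space M \<and> snd z \<in> space S then Vgap k (fst z) (Suc h) (snd z) else 0)"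
    for z
  have "(\<lambda>z. (fst z, snd z)) \<in> ?G \<Otimes>\<^sub>M S \<rightarrow>\<^sub>M FG k 0 2 \<Otimes>\<^sub>M S"
    using measurable_ident_coarser[OF G0] by (intro measurable_Pair measurable_compose[OF measurable_fst]) auto
  from measurable_compose[OF this measurable_pair_Vgap[OF k, of "Suc h"]]
  have "(\<lambda>z. Vgap k (fst z) (Suc h) (snd z)) \<in> borel_measurable (?G \<Otimes>\<^sub>M S)" by simp
  then have g: "g \<in> borel_measurable (?G \<Otimes>\<^sub>M S)"
    by (rule measurable_cong[THEN iffD1, rotated]) (auto simp: g_def space_pair_measure)
  have "\<forall>z. \<bar>g z\<bar> \<le> 2 * H"
    using abs_Vgap_le[OF k] by (simp add: g_def)
  from trans[OF k h g this]
  have "AE w in M. real_cond_exp M ?G (\<lambda>w. g (w, X k (Suc h) w)) w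
      = (\<integral>y. g (w, y) \<partial>P h (X k h w) (A k h w))" .
  moreover have "AE w in M. real_cond_exp M ?G (\<lambda>w. Vgap k w (Suc h) (X k (Suc h) w)) w
      = real_cond_exp M ?G (\<lambda>w. g (w, X k (Suc h) w)) w"
  proof (rule real_cond_exp_cong)
    have Xn: "X k (Suc h) \<in> M \<rightarrow>\<^sub>M S" using h by (intro X_meas[OF k]) auto
    have "(\<lambda>(w, y). g (w, y)) \<in> borel_measurable (?G \<Otimes>\<^sub>M S)" using g by simp
    from measurable_eval_pair[OF this _ _ Xn]
    show "(\<lambda>w. g (w, X k (Suc h) w)) \<in> borel_measurable M" using sub by (auto simp: subalgebra_def)
    from measurable_eval_pair[OF measurable_pair_Vgap[OF k] _ _ Xn]
    show "(\<lambda>w. Vgap k w (Suc h) (X k (Suc h) w)) \<in> borel_measurable M"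
      using subalgebra_FG[OF k, of 0 2] by (auto simp: subalgebra_def)
  qed (use X_space[OF k, of "Suc h"] h in \<open>auto simp: g_def intro!: AE_I2\<close>)
  moreover have "AE w in M.
      (\<integral>y. g (w, y) \<partial>P h (X k h w) (A k h w)) = Pop P h (Vgap k w (Suc h)) (X k h w) (A k h w)"
    unfolding Pop_def using k h X_space[OF k, of h]
    by (intro AE_I2 Bochner_Integration.integral_cong) (auto simp: g_def space_P)
  ultimately show ?thesis by eventually_elim simp
qed

lemma cond_exp_D2:
  assumes k: "k \<in> {1..K}" and h: "h \<in> {1..<H}"
  shows "AE w in M. real_cond_exp M (FG k h 1) (D2 P H R Pol Q X A k h) w = 0"
proof -
  interpret prob_space M by (rule M)
  let ?G = "FG k h 1"
  have sub: "subalgebra M ?G" using k h by (intro subalgebra_FG) auto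
  interpret sigma_finite_subalgebra M ?G by (rule sigma_finite_subalgebra[OF sub])
  have G0: "sets (FG k 0 2) \<subseteq> sets ?G" using k h by (intro sets_FG_mono) auto
  define U where "U w = Pop P h (Vgap k w (Suc h)) (X k h w) (A k h w)" for w
  define V where "V w = Vgap k w (Suc h) (X k (Suc h) w)" for w
  have U: "U \<in> borel_measurable ?G"
    unfolding U_def using k h
    by (intro measurable_Pop_Vgap[OF k _ G0] measurable_FG_X measurable_FG_A) auto
  have "\<bar>U w\<bar> \<le> 2 * H" if "w \<in> space M" for w
    unfolding U_def using that k h by (intro abs_Pop_Vgap_le X_space) auto
  then have intU: "integrable M U"
    using measurable_from_subalg[OF sub U] by (intro integrable_const_bound[where B="2 * H"] AE_I2) auto
  have "X k (Suc h) \<in> M \<rightarrow>\<^sub>M S" using h by (intro X_meas[OF k]) auto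
  from measurable_eval_pair[OF measurable_pair_Vgap[OF k] _ _ this]
  have "V \<in> borel_measurable M"
    unfolding V_def[abs_def] using subalgebra_FG[OF k, of 0 2] by (auto simp: subalgebra_def)
  moreover have "\<bar>V w\<bar> \<le> 2 * H" if "w \<in> space M" for w
    unfolding V_def using that k h by (intro abs_Vgap_le X_space) auto
  ultimately have intV: "integrable M V" by (intro integrable_const_bound[where B="2 * H"] AE_I2) auto
  have "AE w in M. real_cond_exp M ?G (D2 P H R Pol Q X A k h) w
      = real_cond_exp M ?G U w - real_cond_exp M ?G V w"
    unfolding D2_eq[abs_def] U_def[symmetric] V_def[symmetric] by (rule real_cond_exp_diff[OF intU intV])
  moreover have "AE w in M. real_cond_exp M ?G U w = U w"
    by (rule real_cond_exp_F_meas[OF intU U])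
  moreover have "AE w in M. real_cond_exp M ?G V w = U w"
    unfolding U_def V_def[abs_def] by (rule cond_exp_Vgap_next[OF k h])
  ultimately show ?thesis by eventually_elim simp
qed

lemma cond_exp_Dterm_prev:
  assumes H: "1 \<le> H" and k: "k \<in> {1..K}" and h: "h \<in> {1..H}" and m: "m \<in> {1..2}"
    and t: "2 \<le> tidx H k h m"
  shows "AE w in M. real_cond_exp M (Ft M S H R X A (tidx H k h m - 1)) (Dterm P H R Pol Q X A k h m) w = 0"
proof -
  interpret prob_space M by (rule M)
  let ?s = "tidx H k h m - 1"
  show ?thesis
  proof (cases "m = 1")
    case True
    have s: "?s \<in> {1..2 * H * K}" using t tidx_range[OF k h m] by auto
    let ?k = "tidx_episode H ?s" and ?h = "tidx_step H ?s" and ?m = "tidx_half ?s"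
    have range: "?k \<in> {1..K}" "?h \<in> {1..H}" "?m \<in> {1..2}" by (rule tidx_decode_range[OF H s])+
    have "tidx H ?k ?h ?m < tidx H k h m" using s t by (simp add: tidx_decode)
    from tidx_less_imp_lex[OF _ h m range(2,3) this] k True range(3)
    have "?k < k \<or> ?k = k \<and> ?h < h" by auto
    then have sets: "sets (Ft M S H R X A ?s) \<subseteq> sets (FG k (h - 1) 2)"
      unfolding Ft_eq_Fgen using range k h by (intro sets_FG_mono) auto
    have sub: "subalgebra M (FG k (h - 1) 2)" using k h by (intro subalgebra_FG) auto
    have "integrable M (D1 P H R Pol Q X A k h)"
      using integrable_Dterm[OF k h m] unfolding True Dterm_1 .
    from real_cond_exp_zero_mono[OF subalgebra_Ft[OF H s] sub sets this cond_exp_D1[OF k h]]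
    show ?thesis unfolding True Dterm_1 .
  next
    case False
    then have m2: "m = 2" using m by auto
    then have "Ft M S H R X A ?s = FG k h 1"
      using Ft_tidx[of k h H 1] k h by (simp add: tidx_def)
    moreover have "AE w in M. real_cond_exp M (FG k h 1) (D2 P H R Pol Q X A k h) w = 0"
    proof (cases "h = H")
      case True
      interpret sigma_finite_subalgebra M "FG k h 1"
        using k h by (intro sigma_finite_subalgebra subalgebra_FG) auto
      have "D2 P H R Pol Q X A k h = (\<lambda>w. 0)" using True by (intro ext) (simp add: D2_last)
      then show ?thesis using real_cond_exp_F_meas[of "\<lambda>w. 0"] by simp
    next
      case False
      then show ?thesis using k h by (intro cond_exp_D2) auto
    qed
    ultimately show ?thesis using m2 by (simp add: Dterm_2)
  qed
qed

lemma measurable_Mart: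
  assumes H: "1 \<le> H" and t: "t \<in> {1..2 * H * K}"
  shows "Mart P H K R Pol Q X A t \<in> borel_measurable (Ft M S H R X A t)"
proof -
  have "Dterm P H R Pol Q X A k h m \<in> borel_measurable (Ft M S H R X A t)"
    if khm: "k \<in> {1..K}" "h \<in> {1..H}" "m \<in> {1..2}" and le: "tidx H k h m \<le> t" for k h m
  proof -
    have "subalgebra (Ft M S H R X A t) (FG k h m)"
      using le t sets_FG_le_Ft[OF H khm] by (auto simp: subalgebra_def Ft_eq_Fgen)
    from measurable_from_subalg[OF this measurable_Dterm[OF khm]] show ?thesis .
  qed
  then show ?thesis unfolding Mart_def[abs_def] by (intro borel_measurable_sum) auto
qed

lemma integrable_Mart: "integrable M (Mart P H K R Pol Q X A t)"
  unfolding Mart_def[abs_def] by (intro Bochner_Integration.integrable_sum) (auto intro: integrable_Dterm)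

lemma cond_exp_Mart_Suc:
  assumes H: "1 \<le> H" and t: "t \<in> {1..<2 * H * K}"
  shows "AE w in M. real_cond_exp M (Ft M S H R X A t) (Mart P H K R Pol Q X A (Suc t)) w
    = Mart P H K R Pol Q X A t w"
proof -
  interpret prob_space M by (rule M)
  let ?k = "tidx_episode H (Suc t)" and ?h = "tidx_step H (Suc t)" and ?m = "tidx_half (Suc t)"
  have t1: "t \<in> {1..2 * H * K}" and st: "Suc t \<in> {1..2 * H * K}" using t by auto
  have range: "?k \<in> {1..K}" "?h \<in> {1..H}" "?m \<in> {1..2}" by (rule tidx_decode_range[OF H st])+
  have tz: "tidx H ?k ?h ?m = Suc t" by (rule tidx_decode) simp
  interpret sigma_finite_subalgebra M "Ft M S H R X A t"
    by (rule sigma_finite_subalgebra[OF subalgebra_Ft[OF H t1]])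
  have Mart_Suc': "Mart P H K R Pol Q X A (Suc t)
      = (\<lambda>w. Mart P H K R Pol Q X A t w + Dterm P H R Pol Q X A ?k ?h ?m w)"
    using Mart_Suc[OF H] st by (intro ext) auto
  have "AE w in M. real_cond_exp M (Ft M S H R X A t) (Mart P H K R Pol Q X A t) w
      = Mart P H K R Pol Q X A t w"
    by (rule real_cond_exp_F_meas[OF integrable_Mart measurable_Mart[OF H t1]])
  moreover have "AE w in M. real_cond_exp M (Ft M S H R X A t) (Dterm P H R Pol Q X A ?k ?h ?m) w = 0"
    using cond_exp_Dterm_prev[OF H range] tz t by simp
  ultimately show ?thesis
    unfolding Mart_Suc' using real_cond_exp_add[OF integrable_Mart[of t] integrable_Dterm[OF range]]
    by eventually_elim simp
qed

lemma is_martingale_Mart: "is_martingale M (Ft M S H R X A) (Mart P H K R Pol Q X A) (2 * H * K)"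
proof (cases "H = 0")
  case False
  then have "1 \<le> H" by simp
  then show ?thesis
    unfolding is_martingale_def
    using subalgebra_Ft measurable_Mart integrable_Mart sets_Ft_mono cond_exp_Mart_Suc by auto
qed (simp add: is_martingale_def)

section \<open>Regret decomposition\<close>

lemma Vgap_telescope:
  assumes k: "k \<in> {1..K}" and w: "w \<in> space M"
  shows "Vgap k w 1 (X k 1 w) = (\<Sum>h=1..H. D1 P H R Pol Q X A k h w + D2 P H R Pol Q X A k h w
    - iota P H (R k w) (Pol k w) (Q k w) h (X k h w) (A k h w))"
proof -
  let ?V = "\<lambda>h. Vgap k w h (X k h w)"
  have "D1 P H R Pol Q X A k h w + D2 P H R Pol Q X A k h w
      - iota P H (R k w) (Pol k w) (Q k w) h (X k h w) (A k h w) = ?V h - ?V (Suc h)"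
    if h: "h \<in> {1..H}" for h
    using Vest_minus_Vpi_step[where r="R k w" and pk="Pol k w" and Qk="Q k w"
        and a="A k h w" and x'="X k (Suc h) w",
        OF bounded_borel2_R[OF k _ w] Pol_measurable[OF k _ w] bounded_borel2_Q[OF k _ w]
        h X_space[OF k h w]]
    by (simp add: D1_eq D2_eq Qgap_def[abs_def] Vgap_def[abs_def])
  then have "(\<Sum>h=1..H. D1 P H R Pol Q X A k h w + D2 P H R Pol Q X A k h w
      - iota P H (R k w) (Pol k w) (Q k w) h (X k h w) (A k h w)) = - (\<Sum>h=1..H. ?V (Suc h) - ?V h)"
    by (simp add: sum_negf[symmetric])
  also have "\<dots> = ?V 1 - ?V (Suc H)" using sum_Suc_diff[of 1 H ?V] by simp
  also have "?V (Suc H) = 0" by (simp add: Vgap_def Vest_beyond_horizon Vpi_beyond_horizon)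
  finally show ?thesis by simp
qed

lemma episode_regret_decomposition:
  assumes k: "k \<in> {1..K}" and w: "w \<in> space M" and ps: "ps \<in> policies S"
  shows "Vpi P H (R k w) ps 1 (X k 1 w) - Vpi P H (R k w) (Pol k w) 1 (X k 1 w)
     = (\<Sum>h=1..H. Epi P ps h (policy_gap ps (Pol k w) (Q k w) h) (X k 1 w))
       + (\<Sum>h=1..H. D1 P H R Pol Q X A k h w + D2 P H R Pol Q X A k h w)
       + (\<Sum>h=1..H. Epi P ps h (iota P H (R k w) (Pol k w) (Q k w) h) (X k 1 w)
           - iota P H (R k w) (Pol k w) (Q k w) h (X k h w) (A k h w))"
proof -
  have "X k 1 w \<in> space S" using init[OF k w] x1 by simp
  from Vpi_minus_Vest_expansion[where r="R k w" and pk="Pol k w" and Qk="Q k w",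
      OF bounded_borel2_R[OF k _ w] Pol_measurable[OF k _ w] bounded_borel2_Q[OF k _ w] ps this]
  show ?thesis
    using Vgap_telescope[OF k w] unfolding Vgap_def by (simp add: sum.distrib sum_subtractf)
qed

lemma regret_decomposition:
  assumes "w \<in> space M" "ps \<in> policies S"
  shows "(\<Sum>k=1..K. Vpi P H (R k w) ps 1 (X k 1 w) - Vpi P H (R k w) (Pol k w) 1 (X k 1 w))
    = (\<Sum>k=1..K. \<Sum>h=1..H. Epi P ps h
         (\<lambda>y b. \<Sum>c\<in>UNIV. (pmf (ps h y) c - pmf (Pol k w h y) c) * Q k w h y c) (X k 1 w))
      + Mart P H K R Pol Q X A (tidx H K H 2) w
      + (\<Sum>k=1..K. \<Sum>h=1..H. Epi P ps h (iota P H (R k w) (Pol k w) (Q k w) h) (X k 1 w)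
         - iota P H (R k w) (Pol k w) (Q k w) h (X k h w) (A k h w))"
  using episode_regret_decomposition[OF _ assms] unfolding Mart_last policy_gap_def[abs_def]
  by (simp add: sum.distrib)

end

lemma Regret_eq_optimal:
  assumes "ps \<in> policies S"
    and "\<forall>pol\<in>policies S. (\<Sum>k=1..K. Vpi P H (R k w) pol 1 (X k 1 w))
                         \<le> (\<Sum>k=1..K. Vpi P H (R k w) ps 1 (X k 1 w))"
  shows "Regret S P H K R Pol X w
    = (\<Sum>k=1..K. Vpi P H (R k w) ps 1 (X k 1 w) - Vpi P H (R k w) (Pol k w) 1 (X k 1 w))"
proof -
  have "(SUP pol\<in>policies S. \<Sum>k=1..K. Vpi P H (R k w) pol 1 (X k 1 w))
      = (\<Sum>k=1..K. Vpi P H (R k w) ps 1 (X k 1 w))"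
    using assms by (intro cSup_eq_maximum) auto
  then show ?thesis by (simp add: Regret_def sum_subtractf)
qed

theorem lemma4p2:
  fixes M :: "'w measure" and S :: "'s measure"
    and P :: "nat \<Rightarrow> 's \<Rightarrow> 'a::finite \<Rightarrow> 's measure"
    and H K :: nat and x1 :: 's
    and R :: "nat \<Rightarrow> 'w \<Rightarrow> nat \<Rightarrow> 's \<Rightarrow> 'a \<Rightarrow> real"
    and Pol :: "nat \<Rightarrow> 'w \<Rightarrow> nat \<Rightarrow> 's \<Rightarrow> 'a pmf"
    and Q :: "nat \<Rightarrow> 'w \<Rightarrow> nat \<Rightarrow> 's \<Rightarrow> 'a \<Rightarrow> real"
    and X :: "nat \<Rightarrow> nat \<Rightarrow> 'w \<Rightarrow> 's"
    and A :: "nat \<Rightarrow> nat \<Rightarrow> 'w \<Rightarrow> 'a"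
  assumes M: "prob_space M"
    and kernel_prob: "\<And>h x a. h \<in> {1..H} \<Longrightarrow> x \<in> space S \<Longrightarrow> prob_space (P h x a)"
    and kernel_meas: "\<And>h a. h \<in> {1..H} \<Longrightarrow> (\<lambda>x. P h x a) \<in> S \<rightarrow>\<^sub>M subprob_algebra S"
    and x1: "x1 \<in> space S"
    and init: "\<And>k w. k \<in> {1..K} \<Longrightarrow> w \<in> space M \<Longrightarrow> X k 1 w = x1"
    and X_meas: "\<And>k h. k \<in> {1..K} \<Longrightarrow> h \<in> {1..H} \<Longrightarrow> X k h \<in> M \<rightarrow>\<^sub>M S"
    and A_meas: "\<And>k h. k \<in> {1..K} \<Longrightarrow> h \<in> {1..H} \<Longrightarrow> A k h \<in> M \<rightarrow>\<^sub>M count_space UNIV"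
    and R_meas: "\<And>k h x a. k \<in> {1..K} \<Longrightarrow> h \<in> {1..H} \<Longrightarrow> x \<in> space S \<Longrightarrow>
                   (\<lambda>w. R k w h x a) \<in> borel_measurable M"
    and R_joint: "\<And>k h a. k \<in> {1..K} \<Longrightarrow> h \<in> {1..H} \<Longrightarrow>
                   (\<lambda>(w, x). R k w h x a) \<in> borel_measurable (Fgen M S H R X A k 0 2 \<Otimes>\<^sub>M S)"
    and R_range: "\<And>k h w x a. k \<in> {1..K} \<Longrightarrow> h \<in> {1..H} \<Longrightarrow> w \<in> space M \<Longrightarrow> x \<in> space S \<Longrightarrow>
                   0 \<le> R k w h x a \<and> R k w h x a \<le> 1"
    and Pi_joint: "\<And>k h a. k \<in> {1..K} \<Longrightarrow> h \<in> {1..H} \<Longrightarrow>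
                   (\<lambda>(w, x). pmf (Pol k w h x) a) \<in> borel_measurable (Fgen M S H R X A k 0 2 \<Otimes>\<^sub>M S)"
    and Q_joint: "\<And>k h a. k \<in> {1..K} \<Longrightarrow> h \<in> {1..H} \<Longrightarrow>
                   (\<lambda>(w, x). Q k w h x a) \<in> borel_measurable (Fgen M S H R X A k 0 2 \<Otimes>\<^sub>M S)"
    and Q_range: "\<And>k h w x a. k \<in> {1..K} \<Longrightarrow> h \<in> {1..H} \<Longrightarrow> w \<in> space M \<Longrightarrow> x \<in> space S \<Longrightarrow>
                   0 \<le> Q k w h x a \<and> Q k w h x a \<le> real (H - h + 1)"
    and act: "\<And>k h a. k \<in> {1..K} \<Longrightarrow> h \<in> {1..H} \<Longrightarrow>
               AE w in M. real_cond_exp M (Fgen M S H R X A k (h - 1) 2) (\<lambda>w. indicator {a} (A k h w)) w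
                          = pmf (Pol k w h (X k h w)) a"
    and trans: "\<And>k h g B. k \<in> {1..K} \<Longrightarrow> h \<in> {1..<H} \<Longrightarrow>
               g \<in> borel_measurable (Fgen M S H R X A k h 1 \<Otimes>\<^sub>M S) \<Longrightarrow> (\<forall>z. \<bar>g z\<bar> \<le> B) \<Longrightarrow>
               AE w in M. real_cond_exp M (Fgen M S H R X A k h 1) (\<lambda>w. g (w, X k (Suc h) w)) w
                          = (\<integral>y. g (w, y) \<partial>(P h (X k h w) (A k h w)))"
  shows "is_martingale M (Ft M S H R X A) (Mart P H K R Pol Q X A) (2 * H * K) \<and>
    (\<forall>w\<in>space M. \<forall>ps\<in>policies S.
       (\<forall>pol\<in>policies S. (\<Sum>k=1..K. Vpi P H (R k w) pol 1 (X k 1 w))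
                          \<le> (\<Sum>k=1..K. Vpi P H (R k w) ps 1 (X k 1 w))) \<longrightarrow>
       Regret S P H K R Pol X w
         = (\<Sum>k=1..K. Vpi P H (R k w) ps 1 (X k 1 w) - Vpi P H (R k w) (Pol k w) 1 (X k 1 w))
     \<and> (\<Sum>k=1..K. Vpi P H (R k w) ps 1 (X k 1 w) - Vpi P H (R k w) (Pol k w) 1 (X k 1 w))
         = (\<Sum>k=1..K. \<Sum>h=1..H. Epi P ps h
                (\<lambda>y b. \<Sum>c\<in>UNIV. (pmf (ps h y) c - pmf (Pol k w h y) c) * Q k w h y c) (X k 1 w))
           + Mart P H K R Pol Q X A (tidx H K H 2) w
           + (\<Sum>k=1..K. \<Sum>h=1..H.
                Epi P ps h (iota P H (R k w) (Pol k w) (Q k w) h) (X k 1 w)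
                - iota P H (R k w) (Pol k w) (Q k w) h (X k h w) (A k h w)))"
proof -
  interpret oppo M S P H K x1 R Pol Q X A
    by (rule oppo.intro) (fact assms)+
  show ?thesis
    by (intro conjI ballI impI; (rule is_martingale_Mart regret_decomposition Regret_eq_optimal | assumption)+)
qed

end
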